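(* Let $S>0$, $I\ge1$, $J\in\{1,\dots,I\}$, $N_1,\dots,N_I$ positive integers and $\theta_1>\dots>\theta_I>0$. Consider the partial price differentiation problem: maximize $\sum_{i=1}^I n_ip_is_i$ over prices $p^1,\dots,p^J>0$, assignments $a_i^j\in\{0,1\}$ with $\sum_{j=1}^J a_i^j=1$ for each $i$, and $n_i\in\{0,\dots,N_i\}$, subject to $p_i=\sum_{j=1}^J a_i^jp^j$, $s_i=(\theta_i/p_i-1)^+$ for each $i$, and $\sum_{i=1}^I n_is_i\le S$. Call group $i$ effective if $n_is_i>0$, and for each $j$ call the set of effective groups $i$ with $a_i^j=1$ the $j$-th cluster. Then this problem has an optimal solution in which every cluster consists of consecutive integers, i.e. is of the form $\{l,l+1,\dots,m\}$ (or is empty).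
   Context: Group $i$ consists of $N_i$ users each with utility $\theta_i\ln(1+s)$; a user facing unit price $p$ demands $(\theta_i/p-1)^+$, where $(x)^+=\max(x,0)$. The service provider has total resource $S$ and may use at most $J$ distinct unit prices, each group being charged one of them. *)

theory Defs
  imports Complex_Main
begin

definition pos_part :: "real \<Rightarrow> real" where
  "pos_part x = max x 0"

definition group_price :: "nat \<Rightarrow> (nat \<Rightarrow> real) \<Rightarrow> (nat \<Rightarrow> nat \<Rightarrow> nat) \<Rightarrow> nat \<Rightarrow> real" where
  "group_price J p a i = (\<Sum>j=1..J. real (a i j) * p j)"

definition group_demand :: "(nat \<Rightarrow> real) \<Rightarrow> nat \<Rightarrow> (nat \<Rightarrow> real) \<Rightarrow> (nat \<Rightarrow> nat \<Rightarrow> nat) \<Rightarrow> nat \<Rightarrow> real" where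
  "group_demand \<theta> J p a i = pos_part (\<theta> i / group_price J p a i - 1)"

definition ppd_feasible ::
  "real \<Rightarrow> nat \<Rightarrow> nat \<Rightarrow> (nat \<Rightarrow> nat) \<Rightarrow> (nat \<Rightarrow> real)
   \<Rightarrow> (nat \<Rightarrow> real) \<Rightarrow> (nat \<Rightarrow> nat \<Rightarrow> nat) \<Rightarrow> (nat \<Rightarrow> nat) \<Rightarrow> bool" where
  "ppd_feasible S I J N \<theta> p a n \<longleftrightarrow>
     (\<forall>j\<in>{1..J}. p j > 0) \<and>
     (\<forall>i\<in>{1..I}. \<forall>j\<in>{1..J}. a i j \<in> {0, 1}) \<and>
     (\<forall>i\<in>{1..I}. (\<Sum>j=1..J. a i j) = 1) \<and>
     (\<forall>i\<in>{1..I}. n i \<le> N i) \<and>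
     (\<Sum>i=1..I. real (n i) * group_demand \<theta> J p a i) \<le> S"

definition ppd_revenue ::
  "nat \<Rightarrow> nat \<Rightarrow> (nat \<Rightarrow> real) \<Rightarrow> (nat \<Rightarrow> real) \<Rightarrow> (nat \<Rightarrow> nat \<Rightarrow> nat) \<Rightarrow> (nat \<Rightarrow> nat) \<Rightarrow> real" where
  "ppd_revenue I J \<theta> p a n =
     (\<Sum>i=1..I. real (n i) * group_price J p a i * group_demand \<theta> J p a i)"

definition cluster ::
  "nat \<Rightarrow> nat \<Rightarrow> (nat \<Rightarrow> real) \<Rightarrow> (nat \<Rightarrow> real) \<Rightarrow> (nat \<Rightarrow> nat \<Rightarrow> nat) \<Rightarrow> (nat \<Rightarrow> nat) \<Rightarrow> nat \<Rightarrow> nat set" where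
  "cluster I J \<theta> p a n j =
     {i \<in> {1..I}. real (n i) * group_demand \<theta> J p a i > 0 \<and> a i j = 1}"

end

theory Submission
  imports Defs
begin

text \<open>Fix which users are served and which price class each served group uses. If class d has
  n_d served users of total valuation T_d, charging it the price r_d earns T_d - n_d r_d and uses the
  resource T_d / r_d - n_d. Lagrangian duality gives the optimal prices mu sqrt (T_d / n_d), with
  mu = sum_d sqrt (n_d T_d) / (S + sum_d n_d), and the revenue sum_d T_d - mu sum_d sqrt (n_d T_d).
  Every feasible solution is bounded by this value for a configuration in which every served group
  values the good above mu^2, since otherwise dropping groups pays off. Moving each served group to
  a class minimizing a_d + theta_i / a_d, where a_d = sqrt (T_d / n_d), does not increase
  sum_d sqrt (n_d T_d) by AM-GM, so it lowers neither the value nor the threshold; as the preference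
  between two classes switches at a single valuation, the classes become consecutive among the
  served groups. Such a configuration is realized by a solution whose clusters are top segments of
  the class hulls, each charged at least its optimal price. A best configuration among the finitely
  many therefore yields an optimal solution with consecutive clusters.\<close>

lemma sum_group_by:
  fixes g :: "'a \<Rightarrow> 'b \<Rightarrow> 'c::comm_monoid_add"
  assumes "finite D"
  shows "(\<Sum>d\<in>D. \<Sum>i\<in>A. if c i = d then g i d else 0) = (\<Sum>i\<in>A. if c i \<in> D then g i (c i) else 0)"
proof -
  have "(\<Sum>d\<in>D. if c i = d then g i d else 0) = (if c i \<in> D then g i (c i) else 0)" for i
    using sum.delta'[OF assms, of "c i" "g i"] by (simp add: eq_commute)
  then show ?thesis by (subst sum.swap) simp
qed

lemma finite_obtains_arg_max:
  fixes f :: "'a \<Rightarrow> 'b::linorder"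
  assumes "finite A" "A \<noteq> {}"
  obtains a where "a \<in> A" "\<And>b. b \<in> A \<Longrightarrow> f b \<le> f a"
  using obtains_MAX[OF assms, of f] assms by (metis Max_ge finite_imageI imageI)

lemma obtain_single_one:
  fixes x :: "'a \<Rightarrow> nat"
  assumes "finite A" "\<forall>j\<in>A. x j \<in> {0, 1}" "sum x A = 1"
  obtains j where "j \<in> A" "x j = 1" "\<forall>k\<in>A. k \<noteq> j \<longrightarrow> x k = 0"
proof -
  obtain j where j: "j \<in> A" "x j \<noteq> 0" using assms(3) by (metis sum.neutral zero_neq_one)
  then have "x j = 1" using assms(2) by auto
  moreover have "x k = 0" if k: "k \<in> A" "k \<noteq> j" for k
  proof (rule ccontr)
    assume "x k \<noteq> 0"
    then have "x k = 1" using assms(2) k by auto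
    have "x j + x k = sum x {j, k}" using k by simp
    also have "\<dots> \<le> sum x A" using j k assms(1) by (intro sum_mono2) auto
    finally show False using \<open>x j = 1\<close> \<open>x k = 1\<close> assms(3) by simp
  qed
  ultimately show thesis using that j by blast
qed

lemma group_price_eq_single:
  assumes "j \<in> {1..J}" "a i j = 1" "\<forall>k\<in>{1..J}. k \<noteq> j \<longrightarrow> a i k = 0"
  shows "group_price J p a i = p j"
proof -
  have "group_price J p a i = (\<Sum>k=1..J. if k = j then p k else 0)"
    unfolding group_price_def by (rule sum.cong) (use assms in auto)
  also have "\<dots> = p j" using assms(1) by simp
  finally show ?thesis .
qed

lemma price_mult_demand: "p > 0 \<Longrightarrow> p * pos_part (t / p - 1) = pos_part (t - p)"
  unfolding pos_part_def by (simp add: max_mult_distrib_left right_diff_distrib)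

lemma price_balance:
  fixes v t :: "'a \<Rightarrow> real"
  assumes "U + sum v P > 0" "sum (\<lambda>i. v i * t i) P > 0"
  defines "q \<equiv> sum (\<lambda>i. v i * t i) P / (U + sum v P)"
  shows "(\<Sum>i\<in>P. v i * (t i - q)) = q * U" "(\<Sum>i\<in>P. v i * (t i / q - 1)) = U"
proof -
  have q: "q > 0" "sum (\<lambda>i. v i * t i) P = q * (U + sum v P)" using assms by simp_all
  have "(\<Sum>i\<in>P. v i * (t i - q)) = sum (\<lambda>i. v i * t i) P - q * sum v P"
    by (simp add: algebra_simps sum_subtractf sum_distrib_left)
  then show "(\<Sum>i\<in>P. v i * (t i - q)) = q * U" using q by (simp add: algebra_simps)
  have "(\<Sum>i\<in>P. v i * (t i / q - 1)) = sum (\<lambda>i. v i * t i) P / q - sum v P"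
    by (simp add: algebra_simps sum_subtractf sum_divide_distrib)
  then show "(\<Sum>i\<in>P. v i * (t i / q - 1)) = U" using q by simp
qed

lemma ratio_maximizing_subset:
  fixes f n :: "'a \<Rightarrow> real"
  assumes A: "finite A" and S: "S > 0" and n: "\<And>d. d \<in> A \<Longrightarrow> n d \<ge> 0"
  defines "ratio D \<equiv> sum f D / (S + sum n D)"
  obtains D where "D \<subseteq> A" "\<And>D'. D' \<subseteq> A \<Longrightarrow> ratio D' \<le> ratio D"
    "\<And>d. d \<in> D \<Longrightarrow> ratio D * n d < f d" "\<And>d. d \<in> A - D \<Longrightarrow> f d \<le> ratio D * n d"
proof -
  have den: "S + sum n D > 0" if "D \<subseteq> A" for D
    using S sum_nonneg[of D n] n that by (meson add_pos_nonneg subsetD)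
  obtain D1 where D1: "D1 \<subseteq> A" "\<And>D'. D' \<subseteq> A \<Longrightarrow> ratio D' \<le> ratio D1"
    using finite_obtains_arg_max[of "Pow A" ratio] A by (metis Pow_iff Pow_not_empty finite_Pow_iff)
  have "\<exists>D. (D \<subseteq> A \<and> ratio D = ratio D1) \<and>
      (\<forall>D'. D' \<subseteq> A \<and> ratio D' = ratio D1 \<longrightarrow> card D \<le> card D')"
    using D1 by (intro ex_has_least_nat[where k=D1]) simp
  then obtain D where D: "D \<subseteq> A \<and> ratio D = ratio D1"
    and D_least: "\<forall>D'. D' \<subseteq> A \<and> ratio D' = ratio D1 \<longrightarrow> card D \<le> card D'"
    by blast
  have DA: "D \<subseteq> A" using D by simp
  have max: "ratio D' \<le> ratio D" if "D' \<subseteq> A" for D' using D1(2)[OF that] D by simp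
  have finD: "finite D" using DA A finite_subset by blast
  have sumD: "sum f D = ratio D * (S + sum n D)" using den[OF DA] unfolding ratio_def by simp
  have "ratio D * n d < f d" if d: "d \<in> D" for d
  proof (rule ccontr)
    assume "\<not> ratio D * n d < f d"
    define D' where "D' = D - {d}"
    have D'A: "D' \<subseteq> A" using DA unfolding D'_def by auto
    have "sum f D' = sum f D - f d" "sum n D' = sum n D - n d"
      unfolding D'_def using d finD by (simp_all add: sum_diff1)
    then have "sum f D' \<ge> ratio D * (S + sum n D')"
      using sumD \<open>\<not> ratio D * n d < f d\<close> by (simp add: ring_distribs)
    then have "ratio D' \<ge> ratio D" unfolding ratio_def using den[OF D'A] by (simp add: pos_le_divide_eq)
    then have "card D \<le> card D'" using D_least D'A max[OF D'A] D by auto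
    moreover have "card D' < card D" unfolding D'_def using d finD by (meson card_Diff1_less)
    ultimately show False by simp
  qed
  moreover have "f d \<le> ratio D * n d" if d: "d \<in> A - D" for d
  proof (rule ccontr)
    assume "\<not> f d \<le> ratio D * n d"
    define D' where "D' = insert d D"
    have D'A: "D' \<subseteq> A" using DA d unfolding D'_def by auto
    have "sum f D' = sum f D + f d" "sum n D' = sum n D + n d"
      unfolding D'_def using d finD by simp_all
    then have "sum f D' > ratio D * (S + sum n D')"
      using sumD \<open>\<not> f d \<le> ratio D * n d\<close> by (simp add: ring_distribs)
    then have "ratio D' > ratio D" unfolding ratio_def using den[OF D'A] by (simp add: pos_less_divide_eq)
    then show False using max[OF D'A] by simp
  qed
  ultimately show thesis using that DA max by blast
qed

text \<open>For a class of weight n and worth T charged the price r, with n r \<le> T, the earnings are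
  T - n r and the resource used is T / r - n. The function dual_gap n T m is the maximum over r of
  the Lagrangian T - n r - m^2 (T / r - n), attained at r = m sqrt (T / n).\<close>
definition dual_gap :: "real \<Rightarrow> real \<Rightarrow> real \<Rightarrow> real" where
  "dual_gap n T m = (max (sqrt T - m * sqrt n) 0)\<^sup>2"

lemma lagrangian_le_dual_gap:
  fixes n T r m :: real
  assumes "n \<ge> 0" "T \<ge> 0" "r > 0" "n * r \<le> T" "m \<ge> 0"
  shows "T - n * r - m\<^sup>2 * (T / r - n) \<le> dual_gap n T m"
proof (cases "m * sqrt n \<le> sqrt T")
  case True
  define a where "a = sqrt n"
  define b where "b = sqrt T"
  have n: "n = a\<^sup>2" and T: "T = b\<^sup>2" using assms a_def b_def by simp_all
  have "0 \<le> (a * r - m * b)\<^sup>2 / r" using assms by simp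
  then have "b\<^sup>2 - a\<^sup>2 * r - m\<^sup>2 * (b\<^sup>2 / r - a\<^sup>2) \<le> (b - m * a)\<^sup>2"
    using assms(3) by (simp add: field_simps power2_eq_square)
  then show ?thesis using True n T unfolding dual_gap_def a_def b_def by simp
next
  case False
  then have "0 < sqrt n" using assms
    by (metis less_eq_real_def mult_zero_right real_sqrt_ge_zero real_sqrt_gt_0_iff)
  have "(sqrt T)\<^sup>2 < (m * sqrt n)\<^sup>2" using False assms by (intro power_strict_mono) auto
  then have "n * r < n * m\<^sup>2" using assms by (simp add: power_mult_distrib algebra_simps)
  then have "r < m\<^sup>2" using \<open>0 < sqrt n\<close> by simp
  moreover have "T / r - n \<ge> 0" using assms by (simp add: field_simps)
  moreover have "T - n * r - m\<^sup>2 * (T / r - n) = (T / r - n) * (r - m\<^sup>2)"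
    using assms(3) by (simp add: field_simps)
  ultimately show ?thesis using False unfolding dual_gap_def by (simp add: mult_nonneg_nonpos)
qed

lemma mult_less_sqrt_mult_iff:
  fixes n T r :: real
  assumes "n > 0"
  shows "r * n < sqrt (n * T) \<longleftrightarrow> r * sqrt n < sqrt T"
proof -
  have "r * n = sqrt n * (r * sqrt n)" using assms by (simp add: algebra_simps)
  then have "r * n < sqrt (n * T) \<longleftrightarrow> sqrt n * (r * sqrt n) < sqrt n * sqrt T"
    by (simp only: real_sqrt_mult)
  also have "\<dots> \<longleftrightarrow> r * sqrt n < sqrt T" using assms by (simp add: mult_less_cancel_left_pos)
  finally show ?thesis .
qed

lemma dual_gap_eq_square:
  fixes n T m :: real
  assumes "m * n < sqrt (n * T)" "n \<ge> 0" "T \<ge> 0"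
  shows "dual_gap n T m = T - 2 * m * sqrt (n * T) + m\<^sup>2 * n"
proof -
  have "n > 0" using assms by (cases "n = 0") auto
  then have "m * sqrt n < sqrt T" using assms(1) mult_less_sqrt_mult_iff by blast
  then show ?thesis
    unfolding dual_gap_def using assms by (simp add: power2_eq_square algebra_simps real_sqrt_mult)
qed

lemma dual_gap_eq_0:
  fixes n T m :: real
  assumes "sqrt (n * T) \<le> m * n" "n \<ge> 0" "T \<ge> 0" "n = 0 \<Longrightarrow> T = 0"
  shows "dual_gap n T m = 0"
proof (cases "n = 0")
  case False
  then have "sqrt T \<le> m * sqrt n"
    using assms(1,2) mult_less_sqrt_mult_iff[of n m T] by fastforce
  then show ?thesis unfolding dual_gap_def by simp
qed (use assms in \<open>simp add: dual_gap_def\<close>)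

lemma sqrt_le_weighted_mean:
  fixes a x y :: real
  assumes "a > 0" "x \<ge> 0" "y \<ge> 0"
  shows "sqrt (x * y) \<le> (a * x + y / a) / 2"
proof -
  have "sqrt (x * y) = sqrt ((a * x) * (y / a))" using assms by simp
  then show ?thesis using arith_geo_mean_sqrt[of "a * x" "y / a"] assms by simp
qed

lemma add_divide_less_iff:
  fixes x y t :: real
  assumes "y < x" "0 < y"
  shows "x + t / x < y + t / y \<longleftrightarrow> x * y < t"
proof -
  have xy: "x * y > 0" using assms by simp
  have "x + t / x - (y + t / y) = (x - y) * (x * y - t) / (x * y)"
    using assms by (simp add: field_simps)
  then have "x + t / x < y + t / y \<longleftrightarrow> (x - y) * (x * y - t) / (x * y) < 0"
    by linarith
  also have "\<dots> \<longleftrightarrow> x * y - t < 0"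
    using xy assms by (simp add: divide_less_0_iff mult_less_0_iff)
  finally show ?thesis by simp
qed

lemma add_divide_le_iff:
  fixes x y t :: real
  assumes "y < x" "0 < y"
  shows "x + t / x \<le> y + t / y \<longleftrightarrow> x * y \<le> t"
proof -
  have xy: "x * y > 0" using assms by simp
  have "x + t / x - (y + t / y) = (x - y) * (x * y - t) / (x * y)"
    using assms by (simp add: field_simps)
  then have "x + t / x \<le> y + t / y \<longleftrightarrow> (x - y) * (x * y - t) / (x * y) \<le> 0"
    by linarith
  also have "\<dots> \<longleftrightarrow> x * y - t \<le> 0"
    using xy assms by (simp add: divide_le_0_iff mult_le_0_iff)
  finally show ?thesis by simp
qed

text \<open>The preference of a valuation t between two scales x > y, measured by x + t / x against
  y + t / y, switches exactly at t = x y.\<close>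
lemma add_divide_sandwich_eq:
  fixes x y s t u :: real
  assumes "x > 0" "y > 0" "s < t" "t < u"
    and "y + u / y \<le> x + u / x" "x + t / x \<le> y + t / y" "y + s / y \<le> x + s / x"
  shows "x = y"
proof (rule ccontr)
  assume "x \<noteq> y"
  then consider "y < x" | "x < y" by linarith
  then show False
  proof cases
    case 1
    then have "x * y \<le> t" using assms add_divide_le_iff by blast
    then have "x + u / x < y + u / y" using 1 assms add_divide_less_iff by fastforce
    then show False using assms by simp
  next
    case 2
    then have "\<not> y * x < t" using assms add_divide_less_iff[OF 2 \<open>x > 0\<close>, of t] by linarith
    then have "\<not> y + s / y \<le> x + s / x" using 2 assms add_divide_le_iff[OF 2 \<open>x > 0\<close>, of s] by simp
    then show False using assms by simp
  qed
qed

section \<open>Configurations and their closed-form revenue\<close>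

locale ppd =
  fixes S :: real and I J :: nat and N :: "nat \<Rightarrow> nat" and \<theta> :: "nat \<Rightarrow> real"
  assumes S_pos: "S > 0" and J_pos: "1 \<le> J"
    and N_pos: "\<forall>i\<in>{1..I}. N i > 0" and \<theta>_pos: "\<forall>i\<in>{1..I}. \<theta> i > 0"
    and \<theta>_decreasing: "\<forall>i\<in>{1..I}. \<forall>k\<in>{1..I}. i < k \<longrightarrow> \<theta> k < \<theta> i"
begin

text \<open>A configuration (w, c) serves w i users of group i, all of them in the price class c i.\<close>
definition is_assignment :: "(nat \<Rightarrow> nat) \<Rightarrow> bool" where
  "is_assignment c \<longleftrightarrow> (\<forall>i\<in>{1..I}. c i \<in> {1..J})"

definition weight :: "(nat \<Rightarrow> nat) \<Rightarrow> (nat \<Rightarrow> nat) \<Rightarrow> nat \<Rightarrow> real" where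
  "weight w c d = (\<Sum>i=1..I. if c i = d then real (w i) else 0)"

definition worth :: "(nat \<Rightarrow> nat) \<Rightarrow> (nat \<Rightarrow> nat) \<Rightarrow> nat \<Rightarrow> real" where
  "worth w c d = (\<Sum>i=1..I. if c i = d then real (w i) * \<theta> i else 0)"

definition total_weight :: "(nat \<Rightarrow> nat) \<Rightarrow> real" where
  "total_weight w = (\<Sum>i=1..I. real (w i))"

definition total_worth :: "(nat \<Rightarrow> nat) \<Rightarrow> real" where
  "total_worth w = (\<Sum>i=1..I. real (w i) * \<theta> i)"

definition root_sum :: "(nat \<Rightarrow> nat) \<Rightarrow> (nat \<Rightarrow> nat) \<Rightarrow> real" where
  "root_sum w c = (\<Sum>d=1..J. sqrt (weight w c d * worth w c d))"

text \<open>Maximizing the earnings of the classes under the resource bound S gives the prices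
  mu w c * sqrt (worth / weight), which use exactly S and earn best_rev w c.\<close>
definition mu :: "(nat \<Rightarrow> nat) \<Rightarrow> (nat \<Rightarrow> nat) \<Rightarrow> real" where
  "mu w c = root_sum w c / (S + total_weight w)"

definition best_rev :: "(nat \<Rightarrow> nat) \<Rightarrow> (nat \<Rightarrow> nat) \<Rightarrow> real" where
  "best_rev w c = total_worth w - mu w c * root_sum w c"

definition members :: "(nat \<Rightarrow> nat) \<Rightarrow> (nat \<Rightarrow> nat) \<Rightarrow> nat \<Rightarrow> nat set" where
  "members w c d = {i \<in> {1..I}. w i > 0 \<and> c i = d}"

definition used :: "(nat \<Rightarrow> nat) \<Rightarrow> (nat \<Rightarrow> nat) \<Rightarrow> nat set" where
  "used w c = {d \<in> {1..J}. weight w c d > 0}"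

lemma weight_nonneg: "weight w c d \<ge> 0"
  unfolding weight_def by (rule sum_nonneg) auto

lemma worth_nonneg: "worth w c d \<ge> 0"
  unfolding worth_def using \<theta>_pos by (intro sum_nonneg) (auto simp: less_imp_le)

lemma total_weight_nonneg: "total_weight w \<ge> 0"
  unfolding total_weight_def by (rule sum_nonneg) auto

lemma root_sum_nonneg: "root_sum w c \<ge> 0"
  unfolding root_sum_def by (rule sum_nonneg) (simp add: weight_nonneg worth_nonneg)

lemma mu_nonneg: "mu w c \<ge> 0"
  unfolding mu_def using root_sum_nonneg total_weight_nonneg S_pos by simp

lemma best_rev_eq: "best_rev w c = total_worth w - (root_sum w c)\<^sup>2 / (S + total_weight w)"
  unfolding best_rev_def mu_def by (simp add: power2_eq_square)

lemma weight_eq_sum_members: "weight w c d = (\<Sum>i\<in>members w c d. real (w i))"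
  unfolding weight_def members_def by (subst sum.inter_filter) (auto intro: sum.cong)

lemma worth_eq_sum_members: "worth w c d = (\<Sum>i\<in>members w c d. real (w i) * \<theta> i)"
  unfolding worth_def members_def by (subst sum.inter_filter) (auto intro: sum.cong)

lemma finite_members: "finite (members w c d)"
  unfolding members_def by simp

lemma weight_pos_iff: "weight w c d > 0 \<longleftrightarrow> members w c d \<noteq> {}"
  unfolding weight_eq_sum_members
  by (cases "members w c d = {}") (simp, auto intro!: sum_pos finite_members simp: members_def)

lemma worth_pos_iff: "worth w c d > 0 \<longleftrightarrow> members w c d \<noteq> {}"
  unfolding worth_eq_sum_members using \<theta>_pos
  by (cases "members w c d = {}") (simp, auto intro!: sum_pos finite_members simp: members_def)

lemma worth_eq_0_if_weight_eq_0: "weight w c d = 0 \<Longrightarrow> worth w c d = 0"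
  using worth_nonneg[of w c d] weight_pos_iff[of w c d] worth_pos_iff[of w c d] by auto

lemma used_iff: "d \<in> used w c \<longleftrightarrow> d \<in> {1..J} \<and> members w c d \<noteq> {}"
  unfolding used_def by (simp add: weight_pos_iff)

lemma assigned_class_used: "is_assignment c \<Longrightarrow> i \<in> {1..I} \<Longrightarrow> w i > 0 \<Longrightarrow> c i \<in> used w c"
  unfolding used_iff is_assignment_def members_def by blast

lemma weight_eq_0_if_unused: "d \<in> {1..J} \<Longrightarrow> d \<notin> used w c \<Longrightarrow> weight w c d = 0"
  using weight_nonneg[of w c d] unfolding used_def by simp

lemma worth_eq_0_if_unused: "d \<in> {1..J} \<Longrightarrow> d \<notin> used w c \<Longrightarrow> worth w c d = 0"
  using worth_nonneg[of w c d] worth_pos_iff[of w c d] unfolding used_iff by simp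

lemma finite_used: "finite (used w c)"
  unfolding used_def by simp

lemma sum_over_used:
  assumes "\<And>d. d \<in> {1..J} \<Longrightarrow> d \<notin> used w c \<Longrightarrow> g d = 0"
  shows "(\<Sum>d=1..J. g d) = (\<Sum>d\<in>used w c. g d)"
  by (rule sum.mono_neutral_right) (use assms in \<open>auto simp: used_def\<close>)

lemma sum_weight: "is_assignment c \<Longrightarrow> (\<Sum>d=1..J. weight w c d) = total_weight w"
  unfolding weight_def total_weight_def is_assignment_def by (subst sum_group_by) auto

lemma sum_worth: "is_assignment c \<Longrightarrow> (\<Sum>d=1..J. worth w c d) = total_worth w"
  unfolding worth_def total_worth_def is_assignment_def by (subst sum_group_by) auto

lemma best_rev_eq_sum: "is_assignment c \<Longrightarrow>
    best_rev w c = (\<Sum>d=1..J. worth w c d - mu w c * sqrt (weight w c d * worth w c d))"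
  unfolding best_rev_def root_sum_def
  by (simp add: sum_subtractf sum_distrib_left flip: sum_worth[of c w])

definition scale :: "(nat \<Rightarrow> nat) \<Rightarrow> (nat \<Rightarrow> nat) \<Rightarrow> nat \<Rightarrow> real" where
  "scale w c d = sqrt (worth w c d / weight w c d)"

lemma scale_props:
  assumes "d \<in> used w c"
  shows "scale w c d > 0" "scale w c d * weight w c d = sqrt (weight w c d * worth w c d)"
    "worth w c d / scale w c d = sqrt (weight w c d * worth w c d)"
proof -
  have n: "weight w c d > 0" and T: "worth w c d > 0"
    using assms unfolding used_iff by (simp_all add: weight_pos_iff worth_pos_iff)
  then show "scale w c d > 0" unfolding scale_def by simp
  have "sqrt (weight w c d * worth w c d) = sqrt (weight w c d) * sqrt (worth w c d)"
    by (rule real_sqrt_mult)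
  then show "scale w c d * weight w c d = sqrt (weight w c d * worth w c d)"
    "worth w c d / scale w c d = sqrt (weight w c d * worth w c d)"
    unfolding scale_def using n T by (simp_all add: real_sqrt_divide field_simps)
qed

section \<open>Duality bound\<close>

text \<open>A relaxation of pricing a fixed configuration: each class d is charged r d, and every served
  user is counted as buying, even one whose valuation lies below the price.\<close>
definition admissible_prices :: "(nat \<Rightarrow> nat) \<Rightarrow> (nat \<Rightarrow> nat) \<Rightarrow> (nat \<Rightarrow> real) \<Rightarrow> bool" where
  "admissible_prices w c r \<longleftrightarrow>
     (\<forall>d\<in>{1..J}. r d > 0 \<and> weight w c d * r d \<le> worth w c d) \<and>
     (\<Sum>d=1..J. worth w c d / r d - weight w c d) \<le> S"

definition priced_rev :: "(nat \<Rightarrow> nat) \<Rightarrow> (nat \<Rightarrow> nat) \<Rightarrow> (nat \<Rightarrow> real) \<Rightarrow> real" where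
  "priced_rev w c r = (\<Sum>d=1..J. worth w c d - weight w c d * r d)"

lemma priced_rev_le_dual_bound:
  assumes "admissible_prices w c r" "m \<ge> 0"
  shows "priced_rev w c r \<le> m\<^sup>2 * S + (\<Sum>d=1..J. dual_gap (weight w c d) (worth w c d) m)"
proof -
  let ?res = "\<lambda>d. worth w c d / r d - weight w c d"
  have "priced_rev w c r \<le> (\<Sum>d=1..J. m\<^sup>2 * ?res d + dual_gap (weight w c d) (worth w c d) m)"
    unfolding priced_rev_def
  proof (intro sum_mono)
    fix d assume "d \<in> {1..J}"
    then show "worth w c d - weight w c d * r d \<le> m\<^sup>2 * ?res d + dual_gap (weight w c d) (worth w c d) m"
      using lagrangian_le_dual_gap[of "weight w c d" "worth w c d" "r d" m] assms
        weight_nonneg[of w c d] worth_nonneg[of w c d]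
      unfolding admissible_prices_def by auto
  qed
  also have "\<dots> = m\<^sup>2 * (\<Sum>d=1..J. ?res d) + (\<Sum>d=1..J. dual_gap (weight w c d) (worth w c d) m)"
    by (simp add: sum.distrib sum_distrib_left)
  also have "\<dots> \<le> m\<^sup>2 * S + (\<Sum>d=1..J. dual_gap (weight w c d) (worth w c d) m)"
    using assms unfolding admissible_prices_def by (simp add: mult_left_mono)
  finally show ?thesis .
qed

definition restrict_classes :: "(nat \<Rightarrow> nat) \<Rightarrow> (nat \<Rightarrow> nat) \<Rightarrow> nat set \<Rightarrow> nat \<Rightarrow> nat" where
  "restrict_classes w c D i = (if c i \<in> D then w i else 0)"

lemma weight_restrict: "weight (restrict_classes w c D) c d = (if d \<in> D then weight w c d else 0)"
  unfolding weight_def restrict_classes_def by (auto intro!: sum.cong sum.neutral)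

lemma worth_restrict: "worth (restrict_classes w c D) c d = (if d \<in> D then worth w c d else 0)"
  unfolding worth_def restrict_classes_def by (auto intro!: sum.cong sum.neutral)

lemma sum_restrict:
  "D \<subseteq> {1..J} \<Longrightarrow> (\<Sum>d=1..J. if d \<in> D then g d else 0) = (\<Sum>d\<in>D. g d)"
  by (simp add: sum.If_cases Int_absorb1)

lemma restrict_classes_sums:
  assumes "is_assignment c" "D \<subseteq> {1..J}"
  shows "root_sum (restrict_classes w c D) c = (\<Sum>d\<in>D. sqrt (weight w c d * worth w c d))"
    and "total_weight (restrict_classes w c D) = (\<Sum>d\<in>D. weight w c d)"
    and "total_worth (restrict_classes w c D) = (\<Sum>d\<in>D. worth w c d)"
proof -
  have "root_sum (restrict_classes w c D) c = (\<Sum>d=1..J. if d \<in> D then sqrt (weight w c d * worth w c d) else 0)"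
    unfolding root_sum_def weight_restrict worth_restrict by (intro sum.cong) auto
  then show "root_sum (restrict_classes w c D) c = (\<Sum>d\<in>D. sqrt (weight w c d * worth w c d))"
    using sum_restrict[OF assms(2)] by simp
  show "total_weight (restrict_classes w c D) = (\<Sum>d\<in>D. weight w c d)"
    using sum_weight[OF assms(1), of "restrict_classes w c D"] sum_restrict[OF assms(2), of "weight w c"]
    by (simp add: weight_restrict)
  show "total_worth (restrict_classes w c D) = (\<Sum>d\<in>D. worth w c d)"
    using sum_worth[OF assms(1), of "restrict_classes w c D"] sum_restrict[OF assms(2), of "worth w c"]
    by (simp add: worth_restrict)
qed

text \<open>The optimal price mu w c * scale w c d of every class lies below the mean valuation
  worth w c d / weight w c d of its users.\<close>
definition below_mean :: "(nat \<Rightarrow> nat) \<Rightarrow> (nat \<Rightarrow> nat) \<Rightarrow> bool" where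
  "below_mean w c \<longleftrightarrow>
     (\<forall>d\<in>{1..J}. weight w c d > 0 \<longrightarrow> mu w c * sqrt (weight w c d) < sqrt (worth w c d))"

lemma exists_below_mean_restriction:
  assumes c: "is_assignment c"
  obtains D where "D \<subseteq> {1..J}" "below_mean (restrict_classes w c D) c"
    "(mu (restrict_classes w c D) c)\<^sup>2 * S +
       (\<Sum>d=1..J. dual_gap (weight w c d) (worth w c d) (mu (restrict_classes w c D) c))
     \<le> best_rev (restrict_classes w c D) c"
proof -
  define f where "f d = sqrt (weight w c d * worth w c d)" for d
  \<comment> \<open>the classes D that maximize mu are exactly those whose prices stay below their mean\<close>
  obtain D where D: "D \<subseteq> {1..J}"
      "\<And>D'. D' \<subseteq> {1..J} \<Longrightarrow> sum f D' / (S + sum (weight w c) D') \<le> sum f D / (S + sum (weight w c) D)"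
    and inside: "\<And>d. d \<in> D \<Longrightarrow> sum f D / (S + sum (weight w c) D) * weight w c d < f d"
    and outside: "\<And>d. d \<in> {1..J} - D \<Longrightarrow> f d \<le> sum f D / (S + sum (weight w c) D) * weight w c d"
    using ratio_maximizing_subset[of "{1..J}" S "weight w c" f] S_pos weight_nonneg by blast
  define r where "r = mu (restrict_classes w c D) c"
  have r_eq: "r = sum f D / (S + sum (weight w c) D)"
    using restrict_classes_sums[OF c D(1)] unfolding r_def mu_def f_def by simp
  have mean: "below_mean (restrict_classes w c D) c"
    unfolding below_mean_def weight_restrict worth_restrict r_def[symmetric]
    using inside mult_less_sqrt_mult_iff unfolding r_eq[symmetric] f_def by auto
  have gap: "dual_gap (weight w c d) (worth w c d) r =
      (if d \<in> D then worth w c d - 2 * r * f d + r\<^sup>2 * weight w c d else 0)" if "d \<in> {1..J}" for d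
  proof (cases "d \<in> D")
    case True
    then show ?thesis using inside[OF True] dual_gap_eq_square weight_nonneg worth_nonneg
      unfolding r_eq[symmetric] f_def by simp
  next
    case False
    have "dual_gap (weight w c d) (worth w c d) r = 0"
      by (rule dual_gap_eq_0)
        (use outside[of d] that False in \<open>simp_all add: r_eq f_def weight_nonneg worth_nonneg
          worth_eq_0_if_weight_eq_0\<close>)
    then show ?thesis using False by simp
  qed
  have "(\<Sum>d=1..J. dual_gap (weight w c d) (worth w c d) r) =
      (\<Sum>d\<in>D. worth w c d - 2 * r * f d + r\<^sup>2 * weight w c d)"
    unfolding sum_restrict[OF D(1), symmetric] by (rule sum.cong) (simp_all add: gap)
  also have "\<dots> = total_worth (restrict_classes w c D) - 2 * r * sum f D + r\<^sup>2 * sum (weight w c) D"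
    unfolding restrict_classes_sums[OF c D(1)] by (simp add: sum.distrib sum_subtractf sum_distrib_left)
  finally have gap_sum: "(\<Sum>d=1..J. dual_gap (weight w c d) (worth w c d) r) =
      total_worth (restrict_classes w c D) - 2 * r * sum f D + r\<^sup>2 * sum (weight w c) D" .
  have "sum f D = r * (S + sum (weight w c) D)"
    using r_eq S_pos sum_nonneg[of D "weight w c"] weight_nonneg by (simp add: add_pos_nonneg)
  then have "r\<^sup>2 * S + (\<Sum>d=1..J. dual_gap (weight w c d) (worth w c d) r) =
      total_worth (restrict_classes w c D) - r * sum f D"
    unfolding gap_sum by (simp add: power2_eq_square algebra_simps)
  also have "\<dots> = best_rev (restrict_classes w c D) c"
    unfolding best_rev_def r_def[symmetric] using restrict_classes_sums[OF c D(1)] by (simp add: f_def)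
  finally show thesis using that D(1) mean unfolding r_def by simp
qed

lemma priced_rev_le_best_rev_restrict:
  assumes "is_assignment c" "admissible_prices w c r"
  obtains D where "D \<subseteq> {1..J}" "below_mean (restrict_classes w c D) c"
    "priced_rev w c r \<le> best_rev (restrict_classes w c D) c"
proof -
  obtain D where D: "D \<subseteq> {1..J}" "below_mean (restrict_classes w c D) c"
    and bound: "(mu (restrict_classes w c D) c)\<^sup>2 * S +
       (\<Sum>d=1..J. dual_gap (weight w c d) (worth w c d) (mu (restrict_classes w c D) c))
     \<le> best_rev (restrict_classes w c D) c"
    using exists_below_mean_restriction[OF assms(1)] by blast
  have "priced_rev w c r \<le> (mu (restrict_classes w c D) c)\<^sup>2 * S +
       (\<Sum>d=1..J. dual_gap (weight w c d) (worth w c d) (mu (restrict_classes w c D) c))"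
    by (rule priced_rev_le_dual_bound[OF assms(2) mu_nonneg])
  with bound show thesis using that[OF D] by linarith
qed

section \<open>Optimal prices and unprofitable groups\<close>

lemma mu_pos_if_used:
  assumes "d \<in> used w c"
  shows "mu w c > 0"
proof -
  have "0 < sqrt (weight w c d * worth w c d)"
    using assms unfolding used_iff by (simp add: weight_pos_iff worth_pos_iff)
  also have "\<dots> \<le> root_sum w c"
    unfolding root_sum_def using assms unfolding used_def
    by (intro member_le_sum) (auto simp: weight_nonneg worth_nonneg)
  finally show ?thesis unfolding mu_def using S_pos total_weight_nonneg[of w] by (simp add: add_pos_nonneg)
qed

text \<open>The resource used by class d at its optimal price mu w c * scale w c d.\<close>
definition class_resource :: "(nat \<Rightarrow> nat) \<Rightarrow> (nat \<Rightarrow> nat) \<Rightarrow> nat \<Rightarrow> real" where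
  "class_resource w c d = sqrt (weight w c d * worth w c d) / mu w c - weight w c d"

lemma class_resource_unused: "d \<in> {1..J} \<Longrightarrow> d \<notin> used w c \<Longrightarrow> class_resource w c d = 0"
  unfolding class_resource_def by (simp add: weight_eq_0_if_unused worth_eq_0_if_unused)

lemma sum_class_resource:
  assumes "is_assignment c" "mu w c > 0"
  shows "(\<Sum>d=1..J. class_resource w c d) = S"
proof -
  have "(\<Sum>d=1..J. class_resource w c d) = root_sum w c / mu w c - total_weight w"
    unfolding class_resource_def root_sum_def using sum_weight[OF assms(1), of w]
    by (simp add: sum_subtractf sum_divide_distrib)
  also have "\<dots> = S" using assms(2) S_pos total_weight_nonneg[of w] unfolding mu_def
    by (simp add: field_simps add_pos_nonneg)
  finally show ?thesis .
qed

lemma class_budget: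
  assumes mean: "below_mean w c" and d: "d \<in> used w c"
  shows "class_resource w c d > 0" "mu w c < scale w c d"
    "worth w c d = mu w c * scale w c d * (class_resource w c d + weight w c d)"
    "worth w c d - mu w c * sqrt (weight w c d * worth w c d) = mu w c * scale w c d * class_resource w c d"
proof -
  define m where "m = mu w c"
  define a where "a = sqrt (weight w c d)"
  define b where "b = sqrt (worth w c d)"
  have m: "m > 0" unfolding m_def using mu_pos_if_used[OF d] .
  have n_pos: "weight w c d > 0" using d unfolding used_def by simp
  then have a: "a > 0" and n: "weight w c d = a * a" and T: "worth w c d = b * b"
    using worth_nonneg[of w c d] unfolding a_def b_def by simp_all
  have ma_b: "m * a < b" using mean d unfolding below_mean_def used_def m_def a_def b_def by blast
  have scale: "scale w c d = b / a" unfolding scale_def a_def b_def by (simp add: real_sqrt_divide)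
  have f: "sqrt (weight w c d * worth w c d) = a * b" unfolding a_def b_def by (simp add: real_sqrt_mult)
  have U: "class_resource w c d = a * (b - m * a) / m"
    using m unfolding class_resource_def f m_def[symmetric] by (simp add: n field_simps)
  show "class_resource w c d > 0" unfolding U using a m ma_b by simp
  show "mu w c < scale w c d" unfolding scale m_def[symmetric] using a ma_b by (simp add: field_simps)
  show "worth w c d = mu w c * scale w c d * (class_resource w c d + weight w c d)"
    unfolding U scale m_def[symmetric] using a m by (simp add: n T field_simps)
  show "worth w c d - mu w c * sqrt (weight w c d * worth w c d) = mu w c * scale w c d * class_resource w c d"
    unfolding U scale f m_def[symmetric] using a m by (simp add: T field_simps)
qed

lemma best_rev_eq_sum_used:
  assumes "is_assignment c" "below_mean w c"
  shows "best_rev w c = (\<Sum>d\<in>used w c. mu w c * scale w c d * class_resource w c d)"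
proof -
  have "best_rev w c = (\<Sum>d\<in>used w c. worth w c d - mu w c * sqrt (weight w c d * worth w c d))"
    unfolding best_rev_eq_sum[OF assms(1)]
    by (intro sum_over_used) (simp add: weight_eq_0_if_unused worth_eq_0_if_unused)
  also have "\<dots> = (\<Sum>d\<in>used w c. mu w c * scale w c d * class_resource w c d)"
    using class_budget(4)[OF assms(2)] by simp
  finally show ?thesis .
qed

lemma worth_sub_price_weight:
  "worth w c d - r * weight w c d = (\<Sum>i=1..I. if c i = d then real (w i) * (\<theta> i - r) else 0)"
  unfolding worth_def weight_def sum_distrib_left sum_subtractf[symmetric]
  by (rule sum.cong) (simp_all add: algebra_simps)

lemma worth_sub_price_weight_le:
  assumes "\<And>i. i \<in> {1..I} \<Longrightarrow> c i = d \<Longrightarrow> w' i = w i \<or> (w' i = 0 \<and> \<theta> i \<le> r)"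
  shows "worth w c d - r * weight w c d \<le> worth w' c d - r * weight w' c d"
  unfolding worth_sub_price_weight
proof (rule sum_mono)
  fix i assume "i \<in> {1..I}"
  then show "(if c i = d then real (w i) * (\<theta> i - r) else 0) \<le> (if c i = d then real (w' i) * (\<theta> i - r) else 0)"
    using assms[of i] by (auto simp: mult_nonneg_nonpos)
qed

lemma reprice_after_drop:
  assumes mean: "below_mean w c" and d: "d \<in> used w c"
    and drop: "\<And>i. i \<in> {1..I} \<Longrightarrow> c i = d \<Longrightarrow> w' i = w i \<or> (w' i = 0 \<and> \<theta> i \<le> mu w c * scale w c d)"
  defines "r \<equiv> worth w' c d / (class_resource w c d + weight w' c d)"
  shows "r > 0" "weight w' c d * r \<le> worth w' c d" "worth w' c d / r - weight w' c d = class_resource w c d"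
    "worth w c d - mu w c * sqrt (weight w c d * worth w c d) \<le> worth w' c d - weight w' c d * r"
proof -
  define U where "U = class_resource w c d"
  define \<rho> where "\<rho> = mu w c * scale w c d"
  have U_pos: "U > 0" and T: "worth w c d = \<rho> * (U + weight w c d)"
    and earn: "worth w c d - mu w c * sqrt (weight w c d * worth w c d) = \<rho> * U"
    using class_budget[OF mean d] unfolding U_def \<rho>_def by simp_all
  have \<rho>_pos: "\<rho> > 0" unfolding \<rho>_def using mu_pos_if_used[OF d] scale_props(1)[OF d] by simp
  have "worth w c d - \<rho> * weight w c d \<le> worth w' c d - \<rho> * weight w' c d"
    by (rule worth_sub_price_weight_le) (use drop in \<open>auto simp: \<rho>_def\<close>)
  then have \<rho>_le: "\<rho> * (U + weight w' c d) \<le> worth w' c d" using T by (simp add: algebra_simps)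
  have den: "U + weight w' c d > 0" using U_pos weight_nonneg[of w' c d] by linarith
  have r_eq: "r = worth w' c d / (U + weight w' c d)" unfolding r_def U_def ..
  have r_ge: "\<rho> \<le> r" unfolding r_eq using \<rho>_le den by (simp add: pos_le_divide_eq)
  then show r_pos: "r > 0" using \<rho>_pos by linarith
  have T': "worth w' c d = r * (U + weight w' c d)" unfolding r_eq using den by simp
  show "weight w' c d * r \<le> worth w' c d" unfolding T' using r_pos U_pos by (simp add: algebra_simps)
  show "worth w' c d / r - weight w' c d = class_resource w c d" unfolding T' U_def[symmetric] using r_pos by simp
  have "\<rho> * U \<le> r * U" using r_ge U_pos by (simp add: mult_right_mono)
  then show "worth w c d - mu w c * sqrt (weight w c d * worth w c d) \<le> worth w' c d - weight w' c d * r"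
    unfolding earn T' by (simp add: algebra_simps)
qed

lemma weight_mono: "(\<And>i. w' i \<le> w i) \<Longrightarrow> weight w' c d \<le> weight w c d"
  unfolding weight_def by (rule sum_mono) simp

lemma drop_unprofitable_groups:
  assumes c: "is_assignment c" and mean: "below_mean w c" and b: "b \<in> {1..I}" "w b > 0"
    and b_bad: "\<theta> b \<le> mu w c * scale w c (c b)"
  obtains w' where "\<forall>i. w' i = 0 \<or> w' i = w i" "below_mean w' c" "best_rev w c \<le> best_rev w' c"
    "(\<Sum>i=1..I. w' i) < (\<Sum>i=1..I. w i)"
proof -
  define m where "m = mu w c"
  have m: "m > 0" unfolding m_def using mu_pos_if_used assigned_class_used[of c b w] c b by blast
  define w1 where "w1 i = (if \<theta> i \<le> m * scale w c (c i) then 0 else w i)" for i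
  define U where "U = class_resource w c"
  define r where "r d = (if weight w c d > 0 then worth w1 c d / (U d + weight w1 c d) else 1)" for d
  have repriced: "r d > 0 \<and> weight w1 c d * r d \<le> worth w1 c d \<and> worth w1 c d / r d - weight w1 c d = U d \<and>
      worth w c d - m * sqrt (weight w c d * worth w c d) \<le> worth w1 c d - weight w1 c d * r d"
    if d: "d \<in> {1..J}" for d
  proof (cases "weight w c d > 0")
    case True
    then have "d \<in> used w c" using d unfolding used_def by simp
    moreover have "w1 i = w i \<or> (w1 i = 0 \<and> \<theta> i \<le> mu w c * scale w c d)" if "c i = d" for i
      using that unfolding w1_def m_def by auto
    ultimately show ?thesis
      using reprice_after_drop[OF mean] True unfolding r_def U_def m_def by simp
  next
    case False
    then have "weight w c d = 0" using weight_nonneg[of w c d] by simp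
    moreover have "weight w1 c d = 0"
      using weight_mono[of w1 w c d] \<open>weight w c d = 0\<close> weight_nonneg[of w1 c d]
      unfolding w1_def by simp
    ultimately show ?thesis using False unfolding r_def U_def class_resource_def
      by (simp add: worth_eq_0_if_weight_eq_0)
  qed
  have "(\<Sum>d=1..J. worth w1 c d / r d - weight w1 c d) = (\<Sum>d=1..J. U d)"
    using repriced by (intro sum.cong) simp_all
  also have "\<dots> = S" unfolding U_def using sum_class_resource[OF c] m unfolding m_def by simp
  finally have "admissible_prices w1 c r" unfolding admissible_prices_def using repriced by simp
  then obtain D where D: "D \<subseteq> {1..J}" "below_mean (restrict_classes w1 c D) c"
    and rev: "priced_rev w1 c r \<le> best_rev (restrict_classes w1 c D) c"
    using priced_rev_le_best_rev_restrict[OF c] by blast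
  have "best_rev w c \<le> priced_rev w1 c r"
    unfolding best_rev_eq_sum[OF c] priced_rev_def m_def[symmetric] using repriced by (intro sum_mono) simp
  moreover have "(\<Sum>i=1..I. restrict_classes w1 c D i) < (\<Sum>i=1..I. w i)"
  proof (rule sum_strict_mono_ex1)
    show "\<forall>i\<in>{1..I}. restrict_classes w1 c D i \<le> w i"
      unfolding restrict_classes_def w1_def by simp
    show "\<exists>i\<in>{1..I}. restrict_classes w1 c D i < w i"
      using b b_bad unfolding restrict_classes_def w1_def m_def by (intro bexI[of _ b]) auto
  qed simp
  moreover have "\<forall>i. restrict_classes w1 c D i = 0 \<or> restrict_classes w1 c D i = w i"
    unfolding restrict_classes_def w1_def by simp
  ultimately show thesis using that D(2) rev by fastforce
qed

text \<open>Every served group values the good above the squared multiplier. Unlike below_mean,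
  this survives moving groups between classes whenever the multiplier does not grow.\<close>
definition above_threshold :: "(nat \<Rightarrow> nat) \<Rightarrow> (nat \<Rightarrow> nat) \<Rightarrow> bool" where
  "above_threshold w c \<longleftrightarrow> (\<forall>i\<in>{1..I}. w i > 0 \<longrightarrow> (mu w c)\<^sup>2 < \<theta> i)"

lemma exists_above_threshold:
  assumes c: "is_assignment c" and mean: "below_mean w c"
  obtains w' where "\<forall>i. w' i = 0 \<or> w' i = w i" "best_rev w c \<le> best_rev w' c" "above_threshold w' c"
proof -
  define P where "P v \<longleftrightarrow> (\<forall>i. v i = 0 \<or> v i = w i) \<and> below_mean v c \<and> best_rev w c \<le> best_rev v c" for v
  have "P w" unfolding P_def using mean by simp
  then obtain v where Pv: "P v" and v_min: "\<And>v'. P v' \<Longrightarrow> (\<Sum>i=1..I. v i) \<le> (\<Sum>i=1..I. v' i)"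
    using ex_has_least_nat[of P w "\<lambda>v. \<Sum>i=1..I. v i"] by blast
  have "(mu v c)\<^sup>2 < \<theta> i" if i: "i \<in> {1..I}" "v i > 0" for i
  proof -
    have d: "c i \<in> used v c" using assigned_class_used[of c i v] c i by blast
    \<comment> \<open>by minimality of v, no group can be dropped profitably\<close>
    have "mu v c * scale v c (c i) < \<theta> i"
    proof (rule ccontr)
      assume "\<not> ?thesis"
      then obtain v' where "\<forall>i. v' i = 0 \<or> v' i = v i" "below_mean v' c" "best_rev v c \<le> best_rev v' c"
        "(\<Sum>i=1..I. v' i) < (\<Sum>i=1..I. v i)"
        using drop_unprofitable_groups[of c v i] c i Pv unfolding P_def by (metis not_less)
      moreover from this have "P v'" using Pv unfolding P_def by (metis order_trans)
      ultimately show False using v_min by fastforce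
    qed
    moreover have "mu v c * mu v c \<le> mu v c * scale v c (c i)"
      using class_budget(2)[of v c "c i"] Pv d mu_nonneg[of v c] unfolding P_def
      by (simp add: mult_left_mono)
    ultimately show ?thesis by (simp add: power2_eq_square)
  qed
  then show thesis using that Pv unfolding P_def above_threshold_def by blast
qed

lemma above_threshold_imp_below_mean:
  assumes "above_threshold w c"
  shows "below_mean w c"
  unfolding below_mean_def
proof (intro ballI impI)
  fix d assume "d \<in> {1..J}" "weight w c d > 0"
  then have ne: "members w c d \<noteq> {}" by (simp add: weight_pos_iff)
  have "(\<Sum>i\<in>members w c d. real (w i) * (mu w c)\<^sup>2) < (\<Sum>i\<in>members w c d. real (w i) * \<theta> i)"
    using assms ne finite_members unfolding above_threshold_def members_def
    by (intro sum_strict_mono) auto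
  then have "(mu w c)\<^sup>2 * weight w c d < worth w c d"
    unfolding weight_eq_sum_members worth_eq_sum_members by (simp add: sum_distrib_right algebra_simps)
  then have "sqrt ((mu w c * sqrt (weight w c d))\<^sup>2) < sqrt (worth w c d)"
    using weight_nonneg[of w c d] by (simp add: power_mult_distrib)
  then show "mu w c * sqrt (weight w c d) < sqrt (worth w c d)"
    using mu_nonneg[of w c] by simp
qed

section \<open>Reassignment to cheapest classes\<close>

text \<open>By AM-GM, sqrt (n T) \<le> (a n + T / a) / 2 for every a > 0, with equality at the current
  scale a = sqrt (T / n). So cost w c t d / 2 bounds the contribution to root_sum of a user with
  valuation t moved to class d, while the scales are kept fixed.\<close>
definition cost :: "(nat \<Rightarrow> nat) \<Rightarrow> (nat \<Rightarrow> nat) \<Rightarrow> real \<Rightarrow> nat \<Rightarrow> real" where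
  "cost w c t d = scale w c d + t / scale w c d"

lemma cost_sum_eq:
  assumes "\<forall>i\<in>{1..I}. w i > 0 \<longrightarrow> c' i \<in> used w c"
  shows "(\<Sum>d\<in>used w c. scale w c d * weight w c' d + worth w c' d / scale w c d)
    = (\<Sum>i=1..I. real (w i) * cost w c (\<theta> i) (c' i))"
proof -
  have "scale w c d * weight w c' d + worth w c' d / scale w c d
      = (\<Sum>i=1..I. if c' i = d then real (w i) * cost w c (\<theta> i) d else 0)" for d
    unfolding weight_def worth_def cost_def sum_distrib_left sum_divide_distrib sum.distrib[symmetric]
    by (rule sum.cong) (simp_all add: algebra_simps)
  then have "(\<Sum>d\<in>used w c. scale w c d * weight w c' d + worth w c' d / scale w c d)
      = (\<Sum>i=1..I. if c' i \<in> used w c then real (w i) * cost w c (\<theta> i) (c' i) else 0)"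
    by (simp add: sum_group_by[OF finite_used])
  also have "\<dots> = (\<Sum>i=1..I. real (w i) * cost w c (\<theta> i) (c' i))"
    using assms by (intro sum.cong) auto
  finally show ?thesis .
qed

lemma two_root_sum_le_cost_sum:
  assumes "\<forall>i\<in>{1..I}. w i > 0 \<longrightarrow> c' i \<in> used w c"
  shows "2 * root_sum w c' \<le> (\<Sum>i=1..I. real (w i) * cost w c (\<theta> i) (c' i))"
proof -
  have "weight w c' d = 0" if "d \<in> {1..J}" "d \<notin> used w c" for d
    unfolding weight_def using assms that by (intro sum.neutral) auto
  then have "root_sum w c' = (\<Sum>d\<in>used w c. sqrt (weight w c' d * worth w c' d))"
    unfolding root_sum_def by (intro sum_over_used) simp
  also have "\<dots> \<le> (\<Sum>d\<in>used w c. (scale w c d * weight w c' d + worth w c' d / scale w c d) / 2)"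
    by (intro sum_mono sqrt_le_weighted_mean) (simp_all add: scale_props weight_nonneg worth_nonneg)
  also have "\<dots> = (\<Sum>i=1..I. real (w i) * cost w c (\<theta> i) (c' i)) / 2"
    using assms by (subst cost_sum_eq[symmetric]) (auto simp: sum_divide_distrib)
  finally show ?thesis by simp
qed

lemma two_root_sum_eq_cost_sum:
  assumes "is_assignment c"
  shows "2 * root_sum w c = (\<Sum>i=1..I. real (w i) * cost w c (\<theta> i) (c i))"
proof -
  have "root_sum w c = (\<Sum>d\<in>used w c. sqrt (weight w c d * worth w c d))"
    unfolding root_sum_def by (intro sum_over_used) (simp add: weight_eq_0_if_unused)
  also have "\<dots> = (\<Sum>d\<in>used w c. (scale w c d * weight w c d + worth w c d / scale w c d) / 2)"
    by (intro sum.cong) (simp_all add: scale_props)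
  also have "\<dots> = (\<Sum>i=1..I. real (w i) * cost w c (\<theta> i) (c i)) / 2"
    using assigned_class_used[OF assms]
    by (subst cost_sum_eq[symmetric]) (auto simp: sum_divide_distrib)
  finally show ?thesis by simp
qed

definition reassign :: "(nat \<Rightarrow> nat) \<Rightarrow> (nat \<Rightarrow> nat) \<Rightarrow> nat \<Rightarrow> nat" where
  "reassign w c i =
     (if i \<in> {1..I} then
        if w i > 0 then LEAST d. d \<in> used w c \<and> (\<forall>e\<in>used w c. cost w c (\<theta> i) d \<le> cost w c (\<theta> i) e)
        else 1
      else 0)"

lemma reassign_cheapest:
  assumes c: "is_assignment c" and i: "i \<in> {1..I}" "w i > 0"
  shows "reassign w c i \<in> used w c" "\<And>e. e \<in> used w c \<Longrightarrow> cost w c (\<theta> i) (reassign w c i) \<le> cost w c (\<theta> i) e"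
    "\<And>d. d \<in> used w c \<Longrightarrow> \<forall>e\<in>used w c. cost w c (\<theta> i) d \<le> cost w c (\<theta> i) e \<Longrightarrow> reassign w c i \<le> d"
proof -
  define Q where "Q d \<longleftrightarrow> d \<in> used w c \<and> (\<forall>e\<in>used w c. cost w c (\<theta> i) d \<le> cost w c (\<theta> i) e)" for d
  have r: "reassign w c i = (LEAST d. Q d)" unfolding reassign_def Q_def using i by simp
  have "used w c \<noteq> {}" using assigned_class_used[of c i w] c i by blast
  then obtain d0 where "is_arg_min (cost w c (\<theta> i)) (\<lambda>d. d \<in> used w c) d0"
    using ex_is_arg_min_if_finite[OF finite_used] by blast
  then have "Q d0" unfolding Q_def is_arg_min_linorder by blast
  then have "Q (LEAST d. Q d)" by (rule LeastI)
  then show "reassign w c i \<in> used w c" "\<And>e. e \<in> used w c \<Longrightarrow> cost w c (\<theta> i) (reassign w c i) \<le> cost w c (\<theta> i) e"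
    unfolding r Q_def by blast+
  show "\<And>d. d \<in> used w c \<Longrightarrow> \<forall>e\<in>used w c. cost w c (\<theta> i) d \<le> cost w c (\<theta> i) e \<Longrightarrow> reassign w c i \<le> d"
    unfolding r using Q_def Least_le by blast
qed

lemma is_assignment_reassign: "is_assignment c \<Longrightarrow> is_assignment (reassign w c)"
  unfolding is_assignment_def
proof
  fix i assume c: "\<forall>i\<in>{1..I}. c i \<in> {1..J}" and i: "i \<in> {1..I}"
  show "reassign w c i \<in> {1..J}"
  proof (cases "w i > 0")
    case True
    then show ?thesis using reassign_cheapest(1)[of c i w] c i unfolding is_assignment_def used_def by auto
  qed (use i J_pos in \<open>simp add: reassign_def\<close>)
qed

lemma root_sum_reassign_le:
  assumes c: "is_assignment c"
  shows "root_sum w (reassign w c) \<le> root_sum w c"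
proof -
  have "2 * root_sum w (reassign w c) \<le> (\<Sum>i=1..I. real (w i) * cost w c (\<theta> i) (reassign w c i))"
    using reassign_cheapest(1)[OF c] by (intro two_root_sum_le_cost_sum) blast
  also have "\<dots> \<le> (\<Sum>i=1..I. real (w i) * cost w c (\<theta> i) (c i))"
  proof (rule sum_mono)
    fix i assume i: "i \<in> {1..I}"
    show "real (w i) * cost w c (\<theta> i) (reassign w c i) \<le> real (w i) * cost w c (\<theta> i) (c i)"
    proof (cases "w i > 0")
      case True
      then show ?thesis
        using reassign_cheapest(2)[of c i w "c i"] assigned_class_used[of c i w] c i
        by (simp add: mult_left_mono)
    qed simp
  qed
  also have "\<dots> = 2 * root_sum w c" using two_root_sum_eq_cost_sum[OF c] by simp
  finally show ?thesis by simp
qed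

definition convex_classes :: "(nat \<Rightarrow> nat) \<Rightarrow> (nat \<Rightarrow> nat) \<Rightarrow> bool" where
  "convex_classes w c \<longleftrightarrow> (\<forall>i\<in>{1..I}. \<forall>g\<in>{1..I}. \<forall>k\<in>{1..I}.
     i < g \<and> g < k \<and> w i > 0 \<and> w g > 0 \<and> w k > 0 \<and> c i = c k \<longrightarrow> c g = c i)"

lemma convex_classes_reassign:
  assumes c: "is_assignment c"
  shows "convex_classes w (reassign w c)"
  unfolding convex_classes_def
proof (intro ballI impI)
  fix i g k assume ijk: "i \<in> {1..I}" "g \<in> {1..I}" "k \<in> {1..I}"
    and H: "i < g \<and> g < k \<and> 0 < w i \<and> 0 < w g \<and> 0 < w k \<and> reassign w c i = reassign w c k"
  define v where "v = reassign w c i"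
  define u where "u = reassign w c g"
  note cheapest = reassign_cheapest[of c _ w, OF c]
  have v: "v \<in> used w c" "reassign w c k = v" and u: "u \<in> used w c"
    using cheapest(1) ijk H unfolding u_def v_def by auto
  have "scale w c u = scale w c v"
  proof (rule add_divide_sandwich_eq)
    show "scale w c u > 0" "scale w c v > 0" using u v scale_props by auto
    show "\<theta> k < \<theta> g" "\<theta> g < \<theta> i" using \<theta>_decreasing ijk H by auto
    show "scale w c v + \<theta> i / scale w c v \<le> scale w c u + \<theta> i / scale w c u"
      using cheapest(2)[of i u] ijk H u unfolding cost_def v_def by simp
    show "scale w c u + \<theta> g / scale w c u \<le> scale w c v + \<theta> g / scale w c v"
      using cheapest(2)[of g v] ijk H v unfolding cost_def u_def by simp
    show "scale w c v + \<theta> k / scale w c v \<le> scale w c u + \<theta> k / scale w c u"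
      using cheapest(2)[of k u] ijk H u v unfolding cost_def by simp
  qed
  then have same_cost: "cost w c t u = cost w c t v" for t unfolding cost_def by simp
  have "v \<le> u"
    using cheapest(3)[of i u] cheapest(2)[of i] ijk H u same_cost unfolding v_def by metis
  moreover have "u \<le> v"
    using cheapest(3)[of g v] cheapest(2)[of g] ijk H v same_cost unfolding u_def by metis
  ultimately show "reassign w c g = reassign w c i" unfolding u_def v_def by simp
qed

lemma reassign_improves:
  assumes c: "is_assignment c" and above: "above_threshold w c"
  shows "is_assignment (reassign w c)" "above_threshold w (reassign w c)"
    "convex_classes w (reassign w c)" "best_rev w c \<le> best_rev w (reassign w c)"
proof -
  have root: "root_sum w (reassign w c) \<le> root_sum w c" by (rule root_sum_reassign_le[OF c])
  have den: "S + total_weight w > 0" using S_pos total_weight_nonneg[of w] by linarith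
  show "is_assignment (reassign w c)" using is_assignment_reassign[OF c] .
  show "convex_classes w (reassign w c)" using convex_classes_reassign[OF c] .
  have "mu w (reassign w c) \<le> mu w c" unfolding mu_def using root den by (simp add: divide_right_mono)
  then have "(mu w (reassign w c))\<^sup>2 \<le> (mu w c)\<^sup>2" using mu_nonneg by (simp add: power_mono)
  then show "above_threshold w (reassign w c)" using above unfolding above_threshold_def by fastforce
  have "(root_sum w (reassign w c))\<^sup>2 \<le> (root_sum w c)\<^sup>2" using root root_sum_nonneg by (simp add: power_mono)
  then show "best_rev w c \<le> best_rev w (reassign w c)"
    unfolding best_rev_eq using den by (simp add: divide_right_mono)
qed

section \<open>Realization by segments\<close>

lemma \<theta>_antimono: "i \<in> {1..I} \<Longrightarrow> k \<in> {1..I} \<Longrightarrow> i \<le> k \<Longrightarrow> \<theta> k \<le> \<theta> i"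
  using \<theta>_decreasing by (cases "i = k") (auto intro: less_imp_le)

text \<open>The price at which serving all weighted users of groups l to m uses the resource U.\<close>
definition prefix_price :: "(nat \<Rightarrow> real) \<Rightarrow> real \<Rightarrow> nat \<Rightarrow> nat \<Rightarrow> real" where
  "prefix_price v U l m = (\<Sum>i=l..m. v i * \<theta> i) / (U + (\<Sum>i=l..m. v i))"

lemma prefix_price_Suc_le:
  assumes U: "U > 0" and v: "\<forall>i\<in>{l..Suc m}. v i > 0" and lm: "l \<le> m"
    and le: "\<theta> (Suc m) \<le> prefix_price v U l (Suc m)"
  shows "prefix_price v U l (Suc m) \<le> prefix_price v U l m"
proof -
  define t where "t = (\<Sum>i=l..m. v i * \<theta> i)"
  define n where "n = (\<Sum>i=l..m. v i)"
  define p where "p = prefix_price v U l (Suc m)"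
  have n: "n \<ge> 0" unfolding n_def using v by (intro sum_nonneg) (auto intro: less_imp_le)
  have x: "v (Suc m) > 0" using v lm by auto
  have p: "t + v (Suc m) * \<theta> (Suc m) = p * (U + (n + v (Suc m)))"
    unfolding p_def prefix_price_def t_def n_def using lm U n x
    by (simp add: sum.cl_ivl_Suc n_def add_pos_nonneg add.assoc)
  have "t = p * (U + n) + v (Suc m) * (p - \<theta> (Suc m))" using p by (simp add: algebra_simps)
  then have "p * (U + n) \<le> t" using le x unfolding p_def by simp
  then have "p \<le> t / (U + n)" using U n by (simp add: pos_le_divide_eq add_pos_nonneg)
  then show ?thesis unfolding p_def prefix_price_def t_def n_def .
qed

text \<open>Groups above the price gain, groups below it lose; so the segment of all groups valuing
  at least the ratio of K does at least as well as K.\<close>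
lemma ratio_le_prefix_price:
  assumes U: "U > 0" and lr: "1 \<le> l" "l \<le> r" "r \<le> I" and v: "\<forall>i\<in>{l..r}. v i > 0"
    and K: "K \<subseteq> {l..r}" "l \<in> K"
  obtains m where "m \<in> {l..r}" "(\<Sum>i\<in>K. v i * \<theta> i) / (U + sum v K) \<le> prefix_price v U l m"
proof -
  define \<rho> where "\<rho> = (\<Sum>i\<in>K. v i * \<theta> i) / (U + sum v K)"
  have finK: "finite K" using K finite_subset by blast
  have nK: "sum v K \<ge> 0" using K v by (intro sum_nonneg) (auto intro: less_imp_le)
  have \<rho>_eq: "(\<Sum>i\<in>K. v i * \<theta> i) = \<rho> * (U + sum v K)" unfolding \<rho>_def using U nK by simp
  have "(\<Sum>i\<in>K. v i * \<theta> i) \<le> (\<Sum>i\<in>K. v i * \<theta> l)"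
    using K v lr \<theta>_antimono by (intro sum_mono mult_left_mono) (auto intro: less_imp_le)
  also have "\<dots> = \<theta> l * sum v K" by (simp add: sum_distrib_left mult.commute)
  also have "\<dots> < \<theta> l * (U + sum v K)" using U \<theta>_pos lr by simp
  finally have "\<rho> < \<theta> l" using \<rho>_eq U nK by (simp add: mult_less_cancel_right_pos add_pos_nonneg)
  define m where "m = Max {i \<in> {l..r}. \<rho> \<le> \<theta> i}"
  have "m \<in> {i \<in> {l..r}. \<rho> \<le> \<theta> i}"
    unfolding m_def using \<open>\<rho> < \<theta> l\<close> lr by (intro Max_in) auto
  then have m: "m \<in> {l..r}" "\<rho> \<le> \<theta> m" by auto
  have below: "\<rho> \<le> \<theta> i" if "i \<in> {l..m}" for i
    using m that lr \<theta>_antimono[of i m] by auto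
  have above: "\<theta> i < \<rho>" if "i \<in> {l..r}" "m < i" for i
  proof (rule ccontr)
    assume "\<not> \<theta> i < \<rho>"
    then have "i \<le> m" unfolding m_def using that by (intro Max_ge) auto
    then show False using that by simp
  qed
  define g where "g i = v i * (\<theta> i - \<rho>)" for i
  have "\<rho> * U = sum g K" unfolding g_def using \<rho>_eq
    by (simp add: algebra_simps sum_subtractf sum_distrib_left)
  also have "\<dots> = sum g (K \<inter> {l..m}) + sum g (K - {l..m})" using finK by (simp add: sum.Int_Diff)
  also have "sum g (K - {l..m}) \<le> 0"
  proof (rule sum_nonpos)
    fix i assume "i \<in> K - {l..m}"
    then have "i \<in> {l..r}" "m < i" using K m by auto
    then show "g i \<le> 0" using above v unfolding g_def by (simp add: mult_nonneg_nonpos less_imp_le)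
  qed
  also have "sum g (K \<inter> {l..m}) \<le> sum g {l..m}"
  proof (rule sum_mono2)
    fix i assume "i \<in> {l..m} - K \<inter> {l..m}"
    then have "i \<in> {l..r}" "\<rho> \<le> \<theta> i" using m below by auto
    then show "0 \<le> g i" using v unfolding g_def by (simp add: less_imp_le)
  qed auto
  finally have "\<rho> * (U + (\<Sum>i=l..m. v i)) \<le> (\<Sum>i=l..m. v i * \<theta> i)"
    unfolding g_def by (simp add: algebra_simps sum_subtractf sum_distrib_left)
  moreover have "(\<Sum>i=l..m. v i) \<ge> 0" using v m by (intro sum_nonneg) (auto intro: less_imp_le)
  ultimately have "\<rho> \<le> prefix_price v U l m"
    unfolding prefix_price_def using U by (simp add: pos_le_divide_eq add_pos_nonneg)
  then show thesis using that m(1) unfolding \<rho>_def by blast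
qed

text \<open>The shortest segment with the highest price: a group below that price at its end could
  be removed without lowering the price.\<close>
lemma exists_best_prefix:
  assumes U: "U > 0" and lr: "1 \<le> l" "l \<le> r" "r \<le> I" and v: "\<forall>i\<in>{l..r}. v i > 0"
  obtains m where "m \<in> {l..r}" "\<And>m'. m' \<in> {l..r} \<Longrightarrow> prefix_price v U l m' \<le> prefix_price v U l m"
    "\<And>i. i \<in> {l..m} \<Longrightarrow> prefix_price v U l m \<le> \<theta> i"
proof -
  define Q where "Q m \<longleftrightarrow> m \<in> {l..r} \<and> (\<forall>m'\<in>{l..r}. prefix_price v U l m' \<le> prefix_price v U l m)" for m
  obtain m0 where "m0 \<in> {l..r}" "\<And>m'. m' \<in> {l..r} \<Longrightarrow> prefix_price v U l m' \<le> prefix_price v U l m0"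
    by (rule finite_obtains_arg_max[of "{l..r}" "prefix_price v U l"]) (use lr in auto)
  then have "Q m0" unfolding Q_def by blast
  define m where "m = (LEAST m. Q m)"
  have Qm: "Q m" unfolding m_def using \<open>Q m0\<close> by (rule LeastI)
  have "prefix_price v U l m \<le> \<theta> i" if i: "i \<in> {l..m}" for i
  proof (rule ccontr)
    assume "\<not> ?thesis"
    then have "\<theta> m < prefix_price v U l m"
      using \<theta>_antimono[of i m] i Qm lr unfolding Q_def by fastforce
    show False
    proof (cases "m = l")
      case True
      have "v l * \<theta> l < \<theta> l * (U + v l)" using U \<theta>_pos lr by (simp add: algebra_simps)
      then have "prefix_price v U l l < \<theta> l"
        unfolding prefix_price_def using U v lr by (simp add: divide_less_eq add_pos_pos)
      then show False using \<open>\<theta> m < prefix_price v U l m\<close> True by simp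
    next
      case False
      then obtain m' where m': "m = Suc m'" "l \<le> m'" using Qm unfolding Q_def
        by (metis atLeastAtMost_iff le_antisym not_less_eq_eq Suc_pred' gr0I le_zero_eq not_less)
      have "prefix_price v U l (Suc m') \<le> prefix_price v U l m'"
        using prefix_price_Suc_le[OF U _ m'(2)] v Qm \<open>\<theta> m < prefix_price v U l m\<close> m'
        unfolding Q_def by simp
      then have "Q m'" using Qm m' unfolding Q_def by force
      then have "m \<le> m'" unfolding m_def by (rule Least_le)
      then show False using m' by simp
    qed
  qed
  then show thesis using that Qm unfolding Q_def by blast
qed

lemma solution_of_segments:
  assumes D: "D \<subseteq> {1..J}" and P: "\<And>d. d \<in> D \<Longrightarrow> P d \<subseteq> {1..I}"
    and disjoint: "\<And>d e. d \<in> D \<Longrightarrow> e \<in> D \<Longrightarrow> d \<noteq> e \<Longrightarrow> P d \<inter> P e = {}"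
    and q_pos: "\<And>d. d \<in> D \<Longrightarrow> q d > 0" and q_le: "\<And>d i. d \<in> D \<Longrightarrow> i \<in> P d \<Longrightarrow> q d \<le> \<theta> i"
    and vN: "\<And>i. i \<in> {1..I} \<Longrightarrow> v i \<le> N i"
    and budget: "(\<Sum>d\<in>D. \<Sum>i\<in>P d. real (v i) * (\<theta> i / q d - 1)) \<le> S"
  obtains p a n where "ppd_feasible S I J N \<theta> p a n"
    "ppd_revenue I J \<theta> p a n = (\<Sum>d\<in>D. \<Sum>i\<in>P d. real (v i) * (\<theta> i - q d))"
    "\<And>j. j \<in> {1..J} \<Longrightarrow>
       cluster I J \<theta> p a n j = (if j \<in> D then {i \<in> P j. v i > 0 \<and> q j < \<theta> i} else {})"
proof -
  define served where "served i \<longleftrightarrow> (\<exists>d\<in>D. i \<in> P d)" for i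
  define cls where "cls i = (if served i then THE d. d \<in> D \<and> i \<in> P d else 1)" for i
  have cls_eq: "served i \<and> cls i = d" if "d \<in> D" "i \<in> P d" for i d
  proof -
    have "(THE d. d \<in> D \<and> i \<in> P d) = d" using that disjoint by blast
    then show ?thesis using that unfolding cls_def served_def by auto
  qed
  have cls_in: "cls i \<in> D \<and> i \<in> P (cls i)" if "served i" for i
    using that cls_eq unfolding served_def by metis
  have cls_J: "cls i \<in> {1..J}" for i
    using cls_in[of i] D J_pos unfolding cls_def by (cases "served i") auto
  define p where "p j = (if j \<in> D then q j else 1)" for j
  define a where "a i j = (if j = cls i then 1 else 0 :: nat)" for i j
  define n where "n i = (if served i then v i else 0)" for i
  have price: "group_price J p a i = p (cls i)" for i
    by (rule group_price_eq_single) (use cls_J in \<open>auto simp: a_def\<close>)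
  have p_served: "p (cls i) = q (cls i)" "q (cls i) > 0" "q (cls i) \<le> \<theta> i" if "served i" for i
    using cls_in[OF that] q_pos q_le unfolding p_def by auto
  have demand: "real (n i) * group_demand \<theta> J p a i =
      (if served i then real (v i) * (\<theta> i / q (cls i) - 1) else 0)" for i
    using p_served[of i] unfolding group_demand_def price n_def pos_part_def
    by (simp add: field_simps)
  have earning: "real (n i) * group_price J p a i * group_demand \<theta> J p a i =
      (if served i then real (v i) * (\<theta> i - q (cls i)) else 0)" for i
  proof (cases "served i")
    case True
    then have "q (cls i) * pos_part (\<theta> i / q (cls i) - 1) = \<theta> i - q (cls i)"
      using price_mult_demand[of "q (cls i)" "\<theta> i"] p_served[of i] by (simp add: pos_part_def)
    then show ?thesis
      using True p_served[OF True] unfolding group_demand_def price n_def by (simp add: mult.assoc)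
  qed (simp add: n_def)
  have regroup: "(\<Sum>i=1..I. if served i then h (cls i) i else 0) = (\<Sum>d\<in>D. \<Sum>i\<in>P d. h d i)"
    for h :: "nat \<Rightarrow> nat \<Rightarrow> real"
  proof -
    have "(\<Sum>i\<in>P d. h d i) = (\<Sum>i=1..I. if cls i = d then (if served i then h d i else 0) else 0)"
      if d: "d \<in> D" for d
    proof -
      have "(\<Sum>i\<in>P d. h d i) = (\<Sum>i=1..I. if i \<in> P d then h d i else 0)"
        using P[OF d] by (simp add: sum.inter_restrict[symmetric] Int_absorb1)
      also have "\<dots> = (\<Sum>i=1..I. if cls i = d then (if served i then h d i else 0) else 0)"
        using cls_eq[OF d] cls_in by (intro sum.cong) auto
      finally show ?thesis .
    qed
    then have "(\<Sum>d\<in>D. \<Sum>i\<in>P d. h d i) =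
        (\<Sum>d\<in>D. \<Sum>i=1..I. if cls i = d then (if served i then h d i else 0) else 0)"
      by (rule sum.cong[OF refl])
    also have "\<dots> = (\<Sum>i=1..I. if served i then h (cls i) i else 0)"
      using D cls_in by (subst sum_group_by) (auto intro!: sum.cong dest: finite_subset)
    finally show ?thesis by simp
  qed
  have "ppd_feasible S I J N \<theta> p a n"
    unfolding ppd_feasible_def
  proof (intro conjI ballI)
    show "(\<Sum>i=1..I. real (n i) * group_demand \<theta> J p a i) \<le> S"
      using budget regroup[of "\<lambda>d i. real (v i) * (\<theta> i / q d - 1)"] by (simp add: demand)
  qed (use q_pos vN cls_J in \<open>auto simp: p_def a_def n_def\<close>)
  moreover have "ppd_revenue I J \<theta> p a n = (\<Sum>d\<in>D. \<Sum>i\<in>P d. real (v i) * (\<theta> i - q d))"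
    using regroup[of "\<lambda>d i. real (v i) * (\<theta> i - q d)"] by (simp add: ppd_revenue_def earning)
  moreover have "cluster I J \<theta> p a n j = (if j \<in> D then {i \<in> P j. v i > 0 \<and> q j < \<theta> i} else {})"
    if "j \<in> {1..J}" for j
  proof -
    have iff: "real (n i) * group_demand \<theta> J p a i > 0 \<and> a i j = 1 \<longleftrightarrow>
        j \<in> D \<and> i \<in> P j \<and> v i > 0 \<and> q j < \<theta> i" for i
    proof
      assume H: "real (n i) * group_demand \<theta> J p a i > 0 \<and> a i j = 1"
      then have s: "served i" using demand[of i] by (cases "served i") auto
      moreover have j: "cls i = j" using H unfolding a_def by (simp split: if_splits)
      moreover have "0 < real (v i) * (\<theta> i / q j - 1)" using H demand[of i] s j by simp
      ultimately show "j \<in> D \<and> i \<in> P j \<and> v i > 0 \<and> q j < \<theta> i"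
        using cls_in[OF s] q_pos[of j] by (auto simp: zero_less_mult_iff less_divide_eq)
    next
      assume H: "j \<in> D \<and> i \<in> P j \<and> v i > 0 \<and> q j < \<theta> i"
      then have "served i" "cls i = j" using cls_eq by blast+
      moreover have "\<theta> i / q j - 1 > 0" using H q_pos[of j] by (simp add: less_divide_eq)
      ultimately show "real (n i) * group_demand \<theta> J p a i > 0 \<and> a i j = 1"
        using demand[of i] H unfolding a_def by simp
    qed
    show ?thesis
    proof (cases "j \<in> D")
      case True
      then have "P j \<subseteq> {1..I}" by (rule P)
      with iff True show ?thesis unfolding cluster_def by auto
    qed (use iff in \<open>auto simp: cluster_def\<close>)
  qed
  ultimately show thesis using that by blast
qed

lemma superlevel_interval:
  assumes "1 \<le> a" "b \<le> I"
  shows "{i \<in> {a..b}. q < \<theta> i} = {} \<or> (\<exists>l m. {i \<in> {a..b}. q < \<theta> i} = {l..m})"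
proof (cases "{i \<in> {a..b}. q < \<theta> i} = {}")
  case False
  define m where "m = Max {i \<in> {a..b}. q < \<theta> i}"
  have m: "m \<in> {a..b}" "q < \<theta> m" using Max_in[OF _ False] unfolding m_def by auto
  have "{i \<in> {a..b}. q < \<theta> i} = {a..m}"
  proof
    show "{i \<in> {a..b}. q < \<theta> i} \<subseteq> {a..m}" unfolding m_def by auto
    show "{a..m} \<subseteq> {i \<in> {a..b}. q < \<theta> i}"
    proof
      fix i assume "i \<in> {a..m}"
      then have "i \<in> {a..b}" "\<theta> m \<le> \<theta> i" using m assms \<theta>_antimono[of i m] by auto
      then show "i \<in> {i \<in> {a..b}. q < \<theta> i}" using m by simp
    qed
  qed
  then show ?thesis by blast
qed simp

lemma class_hull_separation:
  assumes convex: "convex_classes w c" and d: "d \<in> used w c" and e: "e \<in> used w c" "d \<noteq> e"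
    and le: "Min (members w c d) \<le> Min (members w c e)"
  shows "Max (members w c d) < Min (members w c e)"
proof (rule ccontr)
  define l where "l = Min (members w c d)"
  define r where "r = Max (members w c d)"
  define g where "g = Min (members w c e)"
  have "l \<in> members w c d" "r \<in> members w c d" "g \<in> members w c e"
    using d e finite_members unfolding l_def r_def g_def used_iff by auto
  then have l: "l \<in> {1..I}" "w l > 0" "c l = d" and r: "r \<in> {1..I}" "w r > 0" "c r = d"
    and g: "g \<in> {1..I}" "w g > 0" "c g = e"
    unfolding members_def by auto
  assume "\<not> Max (members w c d) < Min (members w c e)"
  moreover have "l \<noteq> g" "g \<noteq> r" using l g r e(2) by auto
  ultimately have "l < g" "g < r" using le unfolding l_def[symmetric] r_def[symmetric] g_def[symmetric]
    by auto
  then have "c g = c l"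
    using convex[unfolded convex_classes_def, rule_format, OF l(1) g(1) r(1)] l g r by simp
  then show False using l g e(2) by simp
qed

lemma members_hull:
  assumes "d \<in> used w c"
  shows "members w c d \<subseteq> {Min (members w c d)..Max (members w c d)}"
    "Min (members w c d) \<in> members w c d" "1 \<le> Min (members w c d)"
    "Min (members w c d) \<le> Max (members w c d)" "Max (members w c d) \<le> I"
proof -
  have ne: "members w c d \<noteq> {}" using assms unfolding used_iff by simp
  show hull: "members w c d \<subseteq> {Min (members w c d)..Max (members w c d)}"
    using Min_le[OF finite_members] Max_ge[OF finite_members] by auto
  show "Min (members w c d) \<in> members w c d" using Min_in[OF finite_members ne] .
  moreover have "Max (members w c d) \<in> members w c d" using Max_in[OF finite_members ne] .
  ultimately show "1 \<le> Min (members w c d)" "Min (members w c d) \<le> Max (members w c d)"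
    "Max (members w c d) \<le> I"
    using hull unfolding members_def by auto
qed

lemma class_hulls_disjoint:
  assumes "convex_classes w c" "d \<in> used w c" "e \<in> used w c" "d \<noteq> e"
  shows "{Min (members w c d)..Max (members w c d)} \<inter> {Min (members w c e)..Max (members w c e)} = {}"
proof (cases "Min (members w c d) \<le> Min (members w c e)")
  case True
  then have "Max (members w c d) < Min (members w c e)" by (rule class_hull_separation[OF assms])
  then show ?thesis by auto
next
  case False
  then have "Max (members w c e) < Min (members w c d)"
    using class_hull_separation[OF assms(1,3,2) assms(4)[symmetric]] by simp
  then show ?thesis by auto
qed

lemma class_segment:
  assumes mean: "below_mean w c" and d: "d \<in> used w c"
    and v_pos: "\<forall>i\<in>{Min (members w c d)..Max (members w c d)}. v i > 0"
    and v_members: "\<forall>i\<in>members w c d. v i = real (w i)"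
  defines "l \<equiv> Min (members w c d)" and "r \<equiv> Max (members w c d)"
  obtains m where "m \<in> {l..r}" "mu w c * scale w c d \<le> prefix_price v (class_resource w c d) l m"
    "\<And>i. i \<in> {l..m} \<Longrightarrow> prefix_price v (class_resource w c d) l m \<le> \<theta> i"
proof -
  define U where "U = class_resource w c d"
  have U: "U > 0" and T: "worth w c d = mu w c * scale w c d * (U + weight w c d)"
    using class_budget[OF mean d] unfolding U_def by simp_all
  have "(\<Sum>i\<in>members w c d. v i * \<theta> i) = worth w c d" "sum v (members w c d) = weight w c d"
    unfolding worth_eq_sum_members weight_eq_sum_members using v_members by simp_all
  then have ratio: "(\<Sum>i\<in>members w c d. v i * \<theta> i) / (U + sum v (members w c d)) = mu w c * scale w c d"
    using T U weight_nonneg[of w c d] by (simp add: add_pos_nonneg)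
  note hull = members_hull[OF d, folded l_def r_def]
  obtain m1 where m1: "m1 \<in> {l..r}"
    "(\<Sum>i\<in>members w c d. v i * \<theta> i) / (U + sum v (members w c d)) \<le> prefix_price v U l m1"
    by (rule ratio_le_prefix_price[OF U hull(3-5) v_pos[folded l_def r_def] hull(1-2)])
  obtain m where m: "m \<in> {l..r}" "\<And>m'. m' \<in> {l..r} \<Longrightarrow> prefix_price v U l m' \<le> prefix_price v U l m"
    "\<And>i. i \<in> {l..m} \<Longrightarrow> prefix_price v U l m \<le> \<theta> i"
    by (rule exists_best_prefix[OF U hull(3-5) v_pos[folded l_def r_def]]) blast
  have "mu w c * scale w c d \<le> prefix_price v U l m" using m1 m(2)[OF m1(1)] unfolding ratio by linarith
  from that[OF m(1) this[unfolded U_def] m(3)[unfolded U_def]] show thesis .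
qed

lemma realize_configuration:
  assumes c: "is_assignment c" and mean: "below_mean w c" and convex: "convex_classes w c"
    and wN: "\<forall>i\<in>{1..I}. w i \<le> N i"
  obtains p a n where "ppd_feasible S I J N \<theta> p a n" "best_rev w c \<le> ppd_revenue I J \<theta> p a n"
    "\<forall>j\<in>{1..J}. cluster I J \<theta> p a n j = {} \<or> (\<exists>l m. cluster I J \<theta> p a n j = {l..m})"
proof -
  define l where "l d = Min (members w c d)" for d
  define r where "r d = Max (members w c d)" for d
  define U where "U = class_resource w c"
  \<comment> \<open>unserved groups inside the hull of a class are served completely\<close>
  define v where "v i = (if w i > 0 then w i else N i)" for i
  have hull: "members w c d \<subseteq> {l d..r d}" "l d \<in> members w c d" "1 \<le> l d" "l d \<le> r d" "r d \<le> I"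
    if "d \<in> used w c" for d
    using members_hull[OF that] unfolding l_def r_def by simp_all
  have v_pos: "\<forall>i\<in>{l d..r d}. (real \<circ> v) i > 0" if "d \<in> used w c" for d
    using hull[OF that] N_pos unfolding v_def by auto
  have segment: "\<exists>m. m \<in> {l d..r d} \<and> mu w c * scale w c d \<le> prefix_price (real \<circ> v) (U d) (l d) m \<and>
      (\<forall>i\<in>{l d..m}. prefix_price (real \<circ> v) (U d) (l d) m \<le> \<theta> i)" if d: "d \<in> used w c" for d
  proof -
    have "\<forall>i\<in>members w c d. (real \<circ> v) i = real (w i)" unfolding v_def members_def by simp
    then obtain m0 where "m0 \<in> {l d..r d}" "mu w c * scale w c d \<le> prefix_price (real \<circ> v) (U d) (l d) m0"
      "\<And>i. i \<in> {l d..m0} \<Longrightarrow> prefix_price (real \<circ> v) (U d) (l d) m0 \<le> \<theta> i"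
      unfolding l_def r_def U_def by (rule class_segment[OF mean d v_pos[OF d, unfolded l_def r_def]]) blast
    then show ?thesis by blast
  qed
  have "\<exists>m. \<forall>d\<in>used w c. m d \<in> {l d..r d} \<and>
      mu w c * scale w c d \<le> prefix_price (real \<circ> v) (U d) (l d) (m d) \<and>
      (\<forall>i\<in>{l d..m d}. prefix_price (real \<circ> v) (U d) (l d) (m d) \<le> \<theta> i)"
    using segment by (intro bchoice) blast
  then obtain m where m: "\<forall>d\<in>used w c. m d \<in> {l d..r d} \<and>
      mu w c * scale w c d \<le> prefix_price (real \<circ> v) (U d) (l d) (m d) \<and>
      (\<forall>i\<in>{l d..m d}. prefix_price (real \<circ> v) (U d) (l d) (m d) \<le> \<theta> i)"
    by blast
  define P where "P d = {l d..m d}" for d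
  define q where "q d = prefix_price (real \<circ> v) (U d) (l d) (m d)" for d
  have P_hull: "P d \<subseteq> {l d..r d}" "P d \<subseteq> {1..I}" if "d \<in> used w c" for d
    using m hull[OF that] that unfolding P_def by auto
  have q_ge: "mu w c * scale w c d \<le> q d" if "d \<in> used w c" for d
    using m that unfolding q_def by blast
  have q_pos: "q d > 0" if d: "d \<in> used w c" for d
    using q_ge[OF d] mu_pos_if_used[OF d] scale_props(1)[OF d] mult_pos_pos[of "mu w c" "scale w c d"]
    by linarith
  have balance: "(\<Sum>i\<in>P d. real (v i) * (\<theta> i - q d)) = q d * U d"
      "(\<Sum>i\<in>P d. real (v i) * (\<theta> i / q d - 1)) = U d" if d: "d \<in> used w c" for d
  proof -
    have den: "U d + sum (real \<circ> v) (P d) > 0"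
      using class_budget(1)[OF mean d] sum_nonneg[of "P d" "real \<circ> v"] unfolding U_def by simp
    moreover have "(\<Sum>i\<in>P d. (real \<circ> v) i * \<theta> i) > 0"
      using q_pos[OF d] den unfolding q_def prefix_price_def P_def by (simp add: zero_less_divide_iff)
    ultimately show "(\<Sum>i\<in>P d. real (v i) * (\<theta> i - q d)) = q d * U d"
      "(\<Sum>i\<in>P d. real (v i) * (\<theta> i / q d - 1)) = U d"
      using price_balance[of "U d" "real \<circ> v" "P d" \<theta>] unfolding q_def prefix_price_def P_def
      by simp_all
  qed
  have budget: "(\<Sum>d\<in>used w c. U d) \<le> S"
  proof (cases "used w c = {}")
    case False
    then obtain d where "d \<in> used w c" by blast
    then have mu: "mu w c > 0" by (rule mu_pos_if_used)
    have "(\<Sum>d\<in>used w c. U d) = (\<Sum>d=1..J. U d)"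
      unfolding U_def by (intro sum_over_used[symmetric] class_resource_unused)
    also have "\<dots> = S" unfolding U_def by (rule sum_class_resource[OF c mu])
    finally show ?thesis by simp
  qed (simp add: S_pos less_imp_le)
  obtain p a n where sol: "ppd_feasible S I J N \<theta> p a n"
    "ppd_revenue I J \<theta> p a n = (\<Sum>d\<in>used w c. \<Sum>i\<in>P d. real (v i) * (\<theta> i - q d))"
    "\<And>j. j \<in> {1..J} \<Longrightarrow>
       cluster I J \<theta> p a n j = (if j \<in> used w c then {i \<in> P j. v i > 0 \<and> q j < \<theta> i} else {})"
  proof (rule solution_of_segments)
    show "used w c \<subseteq> {1..J}" unfolding used_def by auto
    show "P d \<inter> P e = {}" if "d \<in> used w c" "e \<in> used w c" "d \<noteq> e" for d e
    proof -
      have "{l d..r d} \<inter> {l e..r e} = {}"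
        unfolding l_def r_def by (rule class_hulls_disjoint[OF convex that])
      then show ?thesis using P_hull(1)[OF that(1)] P_hull(1)[OF that(2)] by blast
    qed
    show "(\<Sum>d\<in>used w c. \<Sum>i\<in>P d. real (v i) * (\<theta> i / q d - 1)) \<le> S"
      using budget balance by simp
    show "q d \<le> \<theta> i" if "d \<in> used w c" "i \<in> P d" for d i
      using m that unfolding q_def P_def by blast
  qed (use P_hull q_pos wN in \<open>auto simp: v_def\<close>)
  have "best_rev w c = (\<Sum>d\<in>used w c. mu w c * scale w c d * U d)"
    unfolding U_def by (rule best_rev_eq_sum_used[OF c mean])
  also have "\<dots> \<le> (\<Sum>d\<in>used w c. q d * U d)"
  proof (rule sum_mono)
    fix d assume "d \<in> used w c"
    then show "mu w c * scale w c d * U d \<le> q d * U d"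
      using q_ge class_budget(1)[OF mean] unfolding U_def by (simp add: mult_right_mono less_imp_le)
  qed
  also have "\<dots> = ppd_revenue I J \<theta> p a n" using sol(2) balance by simp
  finally have "best_rev w c \<le> ppd_revenue I J \<theta> p a n" .
  moreover have "cluster I J \<theta> p a n j = {} \<or> (\<exists>l m. cluster I J \<theta> p a n j = {l..m})"
    if j: "j \<in> {1..J}" for j
  proof (cases "j \<in> used w c")
    case True
    have "{i \<in> P j. v i > 0 \<and> q j < \<theta> i} = {i \<in> {l j..m j}. q j < \<theta> i}"
      using v_pos[OF True] P_hull[OF True] unfolding P_def by auto
    moreover have "1 \<le> l j" "m j \<le> I" using hull[OF True] m True by auto
    ultimately show ?thesis using sol(3)[OF j] True superlevel_interval by simp
  qed (use sol(3)[OF j] in simp)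
  ultimately show thesis using that sol(1) by blast
qed

section \<open>Optimal solutions\<close>

lemma priced_rev_eq_sum_groups:
  assumes "is_assignment c"
  shows "priced_rev w c r = (\<Sum>i=1..I. real (w i) * (\<theta> i - r (c i)))"
proof -
  have "worth w c d - weight w c d * r d = (\<Sum>i=1..I. if c i = d then real (w i) * (\<theta> i - r d) else 0)" for d
    using worth_sub_price_weight[of w c d "r d"] by (simp add: mult.commute)
  then have "priced_rev w c r = (\<Sum>i=1..I. if c i \<in> {1..J} then real (w i) * (\<theta> i - r (c i)) else 0)"
    unfolding priced_rev_def by (simp add: sum_group_by)
  also have "\<dots> = (\<Sum>i=1..I. real (w i) * (\<theta> i - r (c i)))"
    using assms unfolding is_assignment_def by (intro sum.cong) auto
  finally show ?thesis .
qed

lemma resource_eq_sum_groups: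
  assumes "is_assignment c"
  shows "(\<Sum>d=1..J. worth w c d / r d - weight w c d) = (\<Sum>i=1..I. real (w i) * (\<theta> i / r (c i) - 1))"
proof -
  have "worth w c d / r d - weight w c d = (\<Sum>i=1..I. if c i = d then real (w i) * (\<theta> i / r d - 1) else 0)" for d
    unfolding worth_def weight_def sum_divide_distrib sum_subtractf[symmetric]
    by (rule sum.cong) (simp_all add: algebra_simps)
  then have "(\<Sum>d=1..J. worth w c d / r d - weight w c d)
      = (\<Sum>i=1..I. if c i \<in> {1..J} then real (w i) * (\<theta> i / r (c i) - 1) else 0)"
    by (simp add: sum_group_by)
  also have "\<dots> = (\<Sum>i=1..I. real (w i) * (\<theta> i / r (c i) - 1))"
    using assms unfolding is_assignment_def by (intro sum.cong) auto
  finally show ?thesis .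
qed

definition price_class :: "(nat \<Rightarrow> nat \<Rightarrow> nat) \<Rightarrow> nat \<Rightarrow> nat" where
  "price_class a i = (THE j. j \<in> {1..J} \<and> a i j = 1)"

lemma price_class:
  assumes "ppd_feasible S I J N \<theta> p a n" "i \<in> {1..I}"
  shows "price_class a i \<in> {1..J}" "group_price J p a i = p (price_class a i)"
proof -
  obtain j where j: "j \<in> {1..J}" "a i j = 1" "\<forall>k\<in>{1..J}. k \<noteq> j \<longrightarrow> a i k = 0"
    using obtain_single_one[of "{1..J}" "a i"] assms unfolding ppd_feasible_def by auto
  then have "price_class a i = j" unfolding price_class_def by (intro the_equality) auto
  then show "price_class a i \<in> {1..J}" "group_price J p a i = p (price_class a i)"
    using group_price_eq_single[of j J a i p] j by simp_all
qed

lemma feasible_configuration: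
  assumes feas: "ppd_feasible S I J N \<theta> p a n"
  obtains w c where "is_assignment c" "\<forall>i. w i = 0 \<or> (i \<in> {1..I} \<and> w i = n i)"
    "admissible_prices w c p" "ppd_revenue I J \<theta> p a n = priced_rev w c p"
proof -
  define c where "c i = (if i \<in> {1..I} then price_class a i else 0)" for i
  define w where "w i = (if i \<in> {1..I} \<and> p (c i) < \<theta> i then n i else 0)" for i
  have c: "is_assignment c" unfolding is_assignment_def c_def using price_class(1)[OF feas] by auto
  have p_pos: "\<forall>j\<in>{1..J}. p j > 0" using feas unfolding ppd_feasible_def by blast
  have group: "real (n i) * group_price J p a i * group_demand \<theta> J p a i = real (w i) * (\<theta> i - p (c i))"
    "real (n i) * group_demand \<theta> J p a i = real (w i) * (\<theta> i / p (c i) - 1)"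
    if i: "i \<in> {1..I}" for i
  proof -
    have price: "group_price J p a i = p (c i)" and "p (c i) > 0"
      using price_class[OF feas i] p_pos i unfolding c_def by auto
    then show "real (n i) * group_price J p a i * group_demand \<theta> J p a i = real (w i) * (\<theta> i - p (c i))"
      "real (n i) * group_demand \<theta> J p a i = real (w i) * (\<theta> i / p (c i) - 1)"
      using price_mult_demand[of "p (c i)" "\<theta> i"] i unfolding group_demand_def w_def pos_part_def
      by (auto simp: mult.assoc field_simps)
  qed
  have "p d * weight w c d \<le> worth w c d" for d
  proof -
    have "0 \<le> (\<Sum>i=1..I. if c i = d then real (w i) * (\<theta> i - p d) else 0)"
      unfolding w_def by (intro sum_nonneg) auto
    then show ?thesis unfolding worth_sub_price_weight[symmetric] by simp
  qed
  moreover have "(\<Sum>d=1..J. worth w c d / p d - weight w c d) \<le> S"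
    using feas group(2) unfolding resource_eq_sum_groups[OF c] ppd_feasible_def by simp
  ultimately have "admissible_prices w c p" unfolding admissible_prices_def using p_pos
    by (simp add: mult.commute)
  moreover have "ppd_revenue I J \<theta> p a n = priced_rev w c p"
    unfolding priced_rev_eq_sum_groups[OF c] ppd_revenue_def using group(1) by simp
  moreover have "\<forall>i. w i = 0 \<or> (i \<in> {1..I} \<and> w i = n i)" unfolding w_def by simp
  ultimately show thesis using that c by blast
qed

definition candidates :: "((nat \<Rightarrow> nat) \<times> (nat \<Rightarrow> nat)) set" where
  "candidates = {(w, c).
     (\<forall>x. (x \<in> {1..I} \<longrightarrow> w x \<le> N x) \<and> (x \<notin> {1..I} \<longrightarrow> w x = 0)) \<and>
     (\<forall>x. (x \<in> {1..I} \<longrightarrow> c x \<in> {1..J}) \<and> (x \<notin> {1..I} \<longrightarrow> c x = 0)) \<and>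
     above_threshold w c \<and> convex_classes w c}"

lemma finite_candidates: "finite candidates"
proof -
  define W where "W = {w. \<forall>x. (x \<in> {1..I} \<longrightarrow> w x \<in> {0..sum N {1..I}}) \<and> (x \<notin> {1..I} \<longrightarrow> w x = 0)}"
  define C where "C = {c. \<forall>x. (x \<in> {1..I} \<longrightarrow> c x \<in> {1..J}) \<and> (x \<notin> {1..I} \<longrightarrow> c x = (0::nat))}"
  have N_le: "N x \<le> sum N {1..I}" if "x \<in> {1..I}" for x using that by (intro member_le_sum) auto
  have "candidates \<subseteq> W \<times> C"
  proof
    fix x assume "x \<in> candidates"
    then obtain w c where x: "x = (w, c)"
      and w: "\<forall>x. (x \<in> {1..I} \<longrightarrow> w x \<le> N x) \<and> (x \<notin> {1..I} \<longrightarrow> w x = 0)"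
      and c: "c \<in> C"
      unfolding candidates_def C_def by blast
    have "w x \<in> {0..sum N {1..I}}" if "x \<in> {1..I}" for x
      using w[rule_format, of x] that N_le[OF that] by simp
    then have "w \<in> W" unfolding W_def using w by blast
    then show "x \<in> W \<times> C" using x c by simp
  qed
  moreover have "finite (W \<times> C)"
    unfolding W_def C_def by (intro finite_cartesian_product finite_set_of_finite_funs) auto
  ultimately show ?thesis by (rule finite_subset)
qed

lemma feasible_revenue_le_candidate:
  assumes feas: "ppd_feasible S I J N \<theta> p a n"
  obtains w c where "(w, c) \<in> candidates" "ppd_revenue I J \<theta> p a n \<le> best_rev w c"
proof -
  obtain w0 c0 where c0: "is_assignment c0" and w0: "\<forall>i. w0 i = 0 \<or> (i \<in> {1..I} \<and> w0 i = n i)"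
    and adm: "admissible_prices w0 c0 p" and rev0: "ppd_revenue I J \<theta> p a n = priced_rev w0 c0 p"
    using feasible_configuration[OF feas] by blast
  obtain D where "below_mean (restrict_classes w0 c0 D) c0"
    and rev1: "priced_rev w0 c0 p \<le> best_rev (restrict_classes w0 c0 D) c0"
    using priced_rev_le_best_rev_restrict[OF c0 adm] by blast
  then obtain w where w: "\<forall>i. w i = 0 \<or> w i = restrict_classes w0 c0 D i"
    and rev2: "best_rev (restrict_classes w0 c0 D) c0 \<le> best_rev w c0" and above: "above_threshold w c0"
    using exists_above_threshold[OF c0] by blast
  have w_le: "w x \<le> w0 x" for x using w[rule_format, of x] unfolding restrict_classes_def by auto
  have "w x \<le> N x" if "x \<in> {1..I}" for x
  proof -
    have "n x \<le> N x" using feas that unfolding ppd_feasible_def by blast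
    then show ?thesis using w_le[of x] w0[rule_format, of x] by (cases "w0 x = 0") auto
  qed
  moreover have "w x = 0" if "x \<notin> {1..I}" for x using w_le[of x] w0[rule_format, of x] that by auto
  moreover have "reassign w c0 x \<in> {1..J}" if "x \<in> {1..I}" for x
    using reassign_improves(1)[OF c0 above] that unfolding is_assignment_def by blast
  moreover have "reassign w c0 x = 0" if "x \<notin> {1..I}" for x using that unfolding reassign_def by presburger
  ultimately have "(w, reassign w c0) \<in> candidates"
    using reassign_improves(2,3)[OF c0 above] unfolding candidates_def by blast
  moreover have "ppd_revenue I J \<theta> p a n \<le> best_rev w (reassign w c0)"
    using rev0 rev1 rev2 reassign_improves(4)[OF c0 above] by linarith
  ultimately show thesis by (rule that)
qed

theorem optimal_solution_with_interval_clusters: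
  "\<exists>p a n. ppd_feasible S I J N \<theta> p a n \<and>
     (\<forall>p' a' n'. ppd_feasible S I J N \<theta> p' a' n' \<longrightarrow> ppd_revenue I J \<theta> p' a' n' \<le> ppd_revenue I J \<theta> p a n) \<and>
     (\<forall>j\<in>{1..J}. cluster I J \<theta> p a n j = {} \<or> (\<exists>l m. cluster I J \<theta> p a n j = {l..m}))"
proof -
  have "(\<lambda>_. 0, \<lambda>x. if x \<in> {1..I} then 1 else 0) \<in> candidates"
    unfolding candidates_def above_threshold_def convex_classes_def using J_pos by auto
  then have "candidates \<noteq> {}" by blast
  then obtain x where x: "x \<in> candidates"
    and best: "\<And>y. y \<in> candidates \<Longrightarrow> best_rev (fst y) (snd y) \<le> best_rev (fst x) (snd x)"
    using finite_obtains_arg_max[OF finite_candidates, where f = "\<lambda>x. best_rev (fst x) (snd x)"] by blast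
  obtain w c where wc: "x = (w, c)" by (cases x)
  with x have "is_assignment c" "below_mean w c" "convex_classes w c" "\<forall>i\<in>{1..I}. w i \<le> N i"
    unfolding candidates_def is_assignment_def by (auto intro: above_threshold_imp_below_mean)
  then obtain p a n where sol: "ppd_feasible S I J N \<theta> p a n" "best_rev w c \<le> ppd_revenue I J \<theta> p a n"
    "\<forall>j\<in>{1..J}. cluster I J \<theta> p a n j = {} \<or> (\<exists>l m. cluster I J \<theta> p a n j = {l..m})"
    by (rule realize_configuration)
  have "ppd_revenue I J \<theta> p' a' n' \<le> ppd_revenue I J \<theta> p a n" if feas: "ppd_feasible S I J N \<theta> p' a' n'" for p' a' n'
  proof -
    obtain w' c' where "(w', c') \<in> candidates" "ppd_revenue I J \<theta> p' a' n' \<le> best_rev w' c'"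
      using feasible_revenue_le_candidate[OF feas] by blast
    then show ?thesis using best[of "(w', c')"] sol(2) wc by simp
  qed
  then show ?thesis using sol by blast
qed

end

theorem theorem4:
  fixes S :: real and I J :: nat and N :: "nat \<Rightarrow> nat" and \<theta> :: "nat \<Rightarrow> real"
  assumes "S > 0" and "I \<ge> 1" and "1 \<le> J" and "J \<le> I"
    and "\<forall>i\<in>{1..I}. N i > 0"
    and "\<forall>i\<in>{1..I}. \<theta> i > 0"
    and "\<forall>i\<in>{1..I}. \<forall>k\<in>{1..I}. i < k \<longrightarrow> \<theta> k < \<theta> i"
  shows "\<exists>p a n. ppd_feasible S I J N \<theta> p a n \<and>
           (\<forall>p' a' n'. ppd_feasible S I J N \<theta> p' a' n' \<longrightarrow>
               ppd_revenue I J \<theta> p' a' n' \<le> ppd_revenue I J \<theta> p a n) \<and>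
           (\<forall>j\<in>{1..J}. cluster I J \<theta> p a n j = {} \<or>
               (\<exists>l m. cluster I J \<theta> p a n j = {l..m}))"
proof -
  interpret ppd S I J N \<theta>
    using assms by unfold_locales auto
  show ?thesis by (rule optimal_solution_with_interval_clusters)
qed

end
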